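(* Let $c\in\mathbb{R}$, $\beta\geq0$, $q\in(0,1)$, $Q=q^2$, $y=e^{-2\beta}$, let $J(i)=i$ for all $i\in\mathbb{Z}$, and assume $$\sum_{i=-\infty}^0 \left(1+q^{2(i-c)}\frac{e^{\beta J(i-1)}}{e^{\beta |J(i)|}+q^2 e^{\beta |J(i-2)|}}\right)^{-1} + \sum_{i=1}^\infty \left(1+q^{-2(i-c)}\frac{e^{\beta J(i-1)}}{e^{\beta |J(i)|}+q^{-2} e^{\beta |J(i-2)|}}\right)^{-1}<\infty.$$ Then for $n\in\mathbb{Z}$, $$Z_{\beta,q,c}^{J}\,\mu_{J}^c\big(\mathbb{1}_{\{N=0\}}e^{-n\beta H_1}\big) = e^{-n\beta} + \sum_{L,R>0} y^{nL+(n-1)R}\sum_{\substack{\ell_1,\dots,\ell_L\geq 1 \\ m_1,\dots,m_{R}\geq 1}}\mathbb{1}_{\{\sum_{j=1}^R m_j= \sum_{j=1}^L\ell_j\}}\prod_{j=1}^{L} \frac{Q^{\frac12 \ell_{j}(\ell_{j}-1)}\big(y^{-(L-j+1)}Q^{\ell_{j}+\cdots + \ell_{L}}\big)^{\ell_{j-1}+1}}{1-y^{-(L-j+1)}Q^{\ell_{j}+\cdots + \ell_{L}}} \prod_{j=1}^{R}\frac{Q^{\frac12 m_{j}(m_{j}-1)}\big(y^{R-j+1}Q^{m_{j}+\cdots+m_{R}}\big)^{m_{j-1}+1}}{1-y^{R-j+1}Q^{m_{j}+\cdots+m_{R}}}\Big(y^{-n/2}+\big(y^{n/2}-y^{-n/2}\big)y^{R-L}Q^{\ell_1+\cdots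 + \ell_L}Q^{m_{1}+\cdots+m_{R}}\Big),$$ with the conventions $\ell_0=-1$, $m_0=0$.
   Context: Spin configurations are $\sigma\in\{-1,+1\}^{\mathbb{Z}}$; $\mathcal{B}$ is the set of configurations for which there exist $a,b\in\mathbb{Z}$ with $\sigma_{a-i}=-1$ and $\sigma_{b+i}=+1$ for all $i\in\mathbb{N}$. $H_J(\sigma)=\sum_{i\in\mathbb{Z}}J(i)\mathbb{1}_{\{\sigma_i\neq\sigma_{i+1}\}}$ and $H_1(\sigma)=\sum_{i\in\mathbb{Z}}\mathbb{1}_{\{\sigma_i\neq\sigma_{i+1}\}}$; $f_c(\sigma)=2\sum_{i=1}^\infty(i-c)\mathbb{1}_{\{\sigma_i=-1\}}-2\sum_{i=-\infty}^0(i-c)\mathbb{1}_{\{\sigma_i=1\}}$; $Z^J_{\beta,q,c}=\sum_\sigma e^{-\beta H_J(\sigma)}q^{f_c(\sigma)}$ and $\mu^c_J(\sigma)=e^{-\beta H_J(\sigma)}q^{f_c(\sigma)}/Z^J_{\beta,q,c}$, concentrated on $\mathcal{B}$ under the summability condition. For $\sigma\in\mathcal{B}$, $N(\sigma)=\#\{i\geq1:\sigma_i=-1\}-\#\{i\leq 0:\sigma_i=+1\}$; $\mu^c_J(F)$ is the expectation of $F$. $L,R$ range over positive integers and $\ell_j,m_j$ over positive integers. *)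

theory Defs
  imports "HOL-Analysis.Analysis"
begin

definition spin_configs :: "(int \<Rightarrow> int) set" where
  "spin_configs = {\<sigma>. \<forall>i. \<sigma> i = -1 \<or> \<sigma> i = 1}"

definition B_set :: "(int \<Rightarrow> int) set" where
  "B_set = {\<sigma> \<in> spin_configs. \<exists>a b. \<forall>i::nat. \<sigma> (a - int i) = -1 \<and> \<sigma> (b + int i) = 1}"

definition H :: "(int \<Rightarrow> real) \<Rightarrow> (int \<Rightarrow> int) \<Rightarrow> real" where
  "H J \<sigma> = (\<Sum>i\<in>{i. \<sigma> i \<noteq> \<sigma> (i+1)}. J i)"

definition H1 :: "(int \<Rightarrow> int) \<Rightarrow> real" where
  "H1 \<sigma> = H (\<lambda>_. 1) \<sigma>"

definition fc :: "real \<Rightarrow> (int \<Rightarrow> int) \<Rightarrow> real" where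
  "fc c \<sigma> = 2 * (\<Sum>i\<in>{i. i \<ge> 1 \<and> \<sigma> i = -1}. (real_of_int i - c))
             - 2 * (\<Sum>i\<in>{i. i \<le> 0 \<and> \<sigma> i = 1}. (real_of_int i - c))"

definition weight :: "(int \<Rightarrow> real) \<Rightarrow> real \<Rightarrow> real \<Rightarrow> real \<Rightarrow> (int \<Rightarrow> int) \<Rightarrow> real" where
  "weight J \<beta> q c \<sigma> = exp (- \<beta> * H J \<sigma>) * q powr (fc c \<sigma>)"

text \<open>Partition function (sum over the configurations in B, where the measure is concentrated).\<close>
definition Zpart :: "(int \<Rightarrow> real) \<Rightarrow> real \<Rightarrow> real \<Rightarrow> real \<Rightarrow> real" where
  "Zpart J \<beta> q c = (\<Sum>\<^sub>\<infinity>\<sigma>\<in>B_set. weight J \<beta> q c \<sigma>)"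

definition mu :: "(int \<Rightarrow> real) \<Rightarrow> real \<Rightarrow> real \<Rightarrow> real \<Rightarrow> ((int \<Rightarrow> int) \<Rightarrow> real) \<Rightarrow> real" where
  "mu J \<beta> q c F = (\<Sum>\<^sub>\<infinity>\<sigma>\<in>B_set. weight J \<beta> q c \<sigma> * F \<sigma>) / Zpart J \<beta> q c"

definition Ncount :: "(int \<Rightarrow> int) \<Rightarrow> int" where
  "Ncount \<sigma> = int (card {i. i \<ge> 1 \<and> \<sigma> i = -1}) - int (card {i. i \<le> 0 \<and> \<sigma> i = 1})"

definition seqv :: "int \<Rightarrow> nat list \<Rightarrow> nat \<Rightarrow> int" where
  "seqv d ls j = (if j = 0 then d else int (ls ! (j - 1)))"

definition tailsum :: "nat list \<Rightarrow> nat \<Rightarrow> nat" where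
  "tailsum ls j = (\<Sum>k\<in>{j..length ls}. ls ! (k - 1))"

definition left_factor :: "real \<Rightarrow> real \<Rightarrow> nat list \<Rightarrow> real" where
  "left_factor y Q ls = (\<Prod>j\<in>{1..length ls}.
     (let L = length ls;
          x = y powr (- real (L - j + 1)) * Q powr real (tailsum ls j);
          lj = real (ls ! (j - 1))
      in Q powr (lj * (lj - 1) / 2) * x powr real_of_int (seqv (-1) ls (j - 1) + 1) / (1 - x)))"

definition right_factor :: "real \<Rightarrow> real \<Rightarrow> nat list \<Rightarrow> real" where
  "right_factor y Q ms = (\<Prod>j\<in>{1..length ms}.
     (let R = length ms;
          x = y powr (real (R - j + 1)) * Q powr real (tailsum ms j);
          mj = real (ms ! (j - 1))
      in Q powr (mj * (mj - 1) / 2) * x powr real_of_int (seqv 0 ms (j - 1) + 1) / (1 - x)))"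

definition tuples :: "nat \<Rightarrow> nat \<Rightarrow> (nat list \<times> nat list) set" where
  "tuples L R = {(ls, ms). length ls = L \<and> length ms = R \<and> (\<forall>x\<in>set ls. x \<ge> 1)
                  \<and> (\<forall>x\<in>set ms. x \<ge> 1) \<and> sum_list ms = sum_list ls}"

definition inner_term :: "real \<Rightarrow> real \<Rightarrow> int \<Rightarrow> nat list \<Rightarrow> nat list \<Rightarrow> real" where
  "inner_term y Q n ls ms = left_factor y Q ls * right_factor y Q ms *
     (y powr (- real_of_int n / 2) + (y powr (real_of_int n / 2) - y powr (- real_of_int n / 2))
        * y powr (real (length ms) - real (length ls)) * Q powr real (sum_list ls) * Q powr real (sum_list ms))"

end

theory Submission
  imports Defs
begin

text \<open>A configuration in \<open>B_set\<close> is determined by the finite set \<open>A \<subseteq> {1..}\<close> of its minus spins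
  and the finite set \<open>B \<subseteq> {..0}\<close> of its plus spins; \<open>N = 0\<close> means \<open>card A = card B\<close>, and the
  configuration with \<open>A = B = {}\<close> contributes \<open>exp (- n \<beta>)\<close>. Split \<open>A\<close> and \<open>-B\<close> into maximal runs of
  consecutive integers, with lengths \<open>m\<^sub>1, \<dots>, m\<^sub>R\<close> and \<open>\<ell>\<^sub>1, \<dots>, \<ell>\<^sub>L\<close>, and record the position of each
  run relative to the previous one. For \<open>J(i) = i\<close> the energy and \<open>f\<^sub>c\<close> are linear in these offsets,
  so for fixed run lengths the weight is a product of independent geometric series, whose sums are
  \<open>left_factor\<close> and \<open>right_factor\<close>. The two half-lines interact only through the domain wall at
  the origin. It is present exactly when \<open>1 \<notin> A\<close> and \<open>0 \<notin> B\<close>, i.e. when the first offset on each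
  side is raised by one, and this gives the last factor of \<open>inner_term\<close>. Convergence of the left
  series needs \<open>Q < y\<close>, and this follows from the first summability hypothesis.\<close>

lemma powr_two_times: "0 < (q::real) \<Longrightarrow> q powr (2 * z) = (q^2) powr z"
  using powr_powr[of q 2 z] powr_realpow[of q 2] by simp

lemma real_card_Diff_singleton:
  assumes "finite X"
  shows "real (card (X - {x})) = real (card X) - (if x \<in> X then 1 else 0)"
proof (cases "x \<in> X")
  case True
  then have "card X = Suc (card (X - {x}))" by (rule card.remove[OF assms])
  then show ?thesis using True by simp
qed simp

lemma length_le_sum_list: "\<forall>x\<in>set ms. (1::nat) \<le> x \<Longrightarrow> length ms \<le> sum_list ms"
  by (induction ms) auto

lemma sum_atLeastLessThan_int_real: "(\<Sum>i\<in>{0..<int m}. real_of_int i) = real m * (real m - 1) / 2"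
proof (induction m)
  case (Suc k)
  have "{0..<int (Suc k)} = insert (int k) {0..<int k}" by auto
  then show ?case using Suc by (simp add: field_simps)
qed simp

section \<open>Infinite sums\<close>

lemma has_sum_mult_nonneg:
  fixes f g :: "_ \<Rightarrow> real"
  assumes "(f has_sum a) A" "(g has_sum b) B" "\<And>x. x \<in> A \<Longrightarrow> 0 \<le> f x" "\<And>y. y \<in> B \<Longrightarrow> 0 \<le> g y"
  shows "((\<lambda>(x, y). f x * g y) has_sum (a * b)) (A \<times> B)"
proof -
  have inner: "((\<lambda>y. f x * g y) has_sum (f x * b)) B" for x
    using has_sum_cmult_right[OF assms(2)] .
  have outer: "((\<lambda>x. f x * b) has_sum (a * b)) A"
    using has_sum_cmult_left[OF assms(1)] .
  have "(\<lambda>(x, y). f x * g y) summable_on A \<times> B"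
    using inner outer assms(3,4) by (intro summable_on_SigmaI[where g = "\<lambda>x. f x * b"])
      (auto simp: has_sum_imp_summable)
  then show ?thesis
    using inner outer by (intro has_sum_SigmaI[where g = "\<lambda>x. f x * b"]) auto
qed

lemma summable_on_mult_nonneg:
  fixes f g :: "_ \<Rightarrow> real"
  assumes "f summable_on A" "g summable_on B" "\<And>x. x \<in> A \<Longrightarrow> 0 \<le> f x" "\<And>y. y \<in> B \<Longrightarrow> 0 \<le> g y"
  shows "(\<lambda>(x, y). f x * g y) summable_on (A \<times> B)"
  using has_sum_mult_nonneg[OF has_sum_infsum[OF assms(1)] has_sum_infsum[OF assms(2)] assms(3,4)]
  by (rule has_sum_imp_summable)

lemma has_sum_restrict_subset:
  "T \<subseteq> S \<Longrightarrow> ((\<lambda>x. if x \<in> T then f x else 0) has_sum a) S \<longleftrightarrow> (f has_sum a) T"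
  by (rule has_sum_cong_neutral) auto

lemma summable_on_Sigma_section:
  fixes f :: "'a \<times> 'b \<Rightarrow> 'c::{complete_uniform_space, uniform_topological_group_add, ab_group_add,
    topological_comm_monoid_add}"
  assumes "f summable_on Sigma A B" "x \<in> A"
  shows "(\<lambda>y. f (x, y)) summable_on B x"
  using summable_on_SigmaD1[of "\<lambda>x y. f (x, y)"] assms by simp

lemma infsum_Sigma_has_sum_sections:
  fixes f :: "'a \<times> 'b \<Rightarrow> 'c::banach"
  assumes "f summable_on Sigma A B" "\<And>x. x \<in> A \<Longrightarrow> ((\<lambda>y. f (x, y)) has_sum g x) (B x)"
  shows "infsum f (Sigma A B) = infsum g A"
  using infsum_Sigma_banach[OF assms(1)] assms(2) by (metis (mono_tags, lifting) infsumI infsum_cong)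

lemma has_sum_powr_atLeast_int:
  fixes x :: real
  assumes "0 < x" "x < 1"
  shows "((\<lambda>t::int. x powr real_of_int t) has_sum (x powr real_of_int b / (1 - x))) {b..}"
proof -
  have "((\<lambda>n::nat. x ^ n) has_sum (1 / (1 - x))) UNIV"
    by (rule sums_nonneg_imp_has_sum) (use assms geometric_sums[of x] in auto)
  from has_sum_cmult_right[OF this, of "x powr real_of_int b"]
  have "((\<lambda>n::nat. x powr real_of_int (b + int n)) has_sum (x powr real_of_int b / (1 - x))) UNIV"
    using assms by (simp add: powr_add powr_realpow)
  also have "?this \<longleftrightarrow> ?thesis"
    by (rule has_sum_reindex_bij_witness[of _ "\<lambda>t. nat (t - b)" "\<lambda>n. b + int n"]) auto
  finally show ?thesis .
qed

lemma summable_on_powr_atLeast_int: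
  fixes x :: real
  assumes "0 < x" "x < 1"
  shows "(\<lambda>t::int. C * x powr real_of_int t) summable_on {b..}"
  using has_sum_imp_summable[OF has_sum_powr_atLeast_int[OF assms]] by (rule summable_on_cmult_right)

lemma summable_on_powr_atMost_int:
  fixes x :: real
  assumes "1 < x"
  shows "(\<lambda>t::int. C * x powr real_of_int t) summable_on {..b}"
proof -
  have "(\<lambda>t::int. C * (1 / x) powr real_of_int t) summable_on {-b..}"
    using assms by (intro summable_on_powr_atLeast_int) auto
  also have "?this \<longleftrightarrow> ?thesis"
    using assms by (intro summable_on_reindex_bij_witness[of _ uminus uminus]) (auto simp: powr_divide powr_minus_divide)
  finally show ?thesis .
qed

lemma summable_on_prod_finite_subsets:
  fixes r :: "'a \<Rightarrow> real"
  assumes nonneg: "\<And>i. i \<in> S \<Longrightarrow> 0 \<le> r i" and summable: "r summable_on S"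
  shows "(\<lambda>A. \<Prod>i\<in>A. r i) summable_on {A. A \<subseteq> S \<and> finite A}"
proof (rule nonneg_bdd_above_summable_on)
  show "0 \<le> (\<Prod>i\<in>A. r i)" if "A \<in> {A. A \<subseteq> S \<and> finite A}" for A
    using nonneg that by (auto intro: prod_nonneg)
  show "bdd_above (sum (\<lambda>A. \<Prod>i\<in>A. r i) ` {F. F \<subseteq> {A. A \<subseteq> S \<and> finite A} \<and> finite F})"
  proof (rule bdd_aboveI2)
    fix F assume F: "F \<in> {F. F \<subseteq> {A. A \<subseteq> S \<and> finite A} \<and> finite F}"
    define U where "U = \<Union>F"
    have "finite U" "U \<subseteq> S" using F by (auto simp: U_def)
    have "(\<Sum>A\<in>F. \<Prod>i\<in>A. r i) \<le> (\<Sum>A\<in>Pow U. \<Prod>i\<in>A. r i)"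
      using \<open>finite U\<close> \<open>U \<subseteq> S\<close> nonneg by (intro sum_mono2 prod_nonneg) (auto simp: U_def, blast)
    also have "\<dots> = (\<Prod>i\<in>U. r i + 1)"
      using prod_add[OF \<open>finite U\<close>, of r "\<lambda>_. 1"] by simp
    also have "\<dots> \<le> (\<Prod>i\<in>U. exp (r i))"
      using \<open>U \<subseteq> S\<close> nonneg by (intro prod_mono) (auto simp: add.commute[of _ 1])
    also have "\<dots> = exp (\<Sum>i\<in>U. r i)" by (simp add: exp_sum \<open>finite U\<close>)
    also have "\<dots> \<le> exp (infsum r S)"
      using finite_sum_le_infsum[OF summable \<open>finite U\<close> \<open>U \<subseteq> S\<close>] nonneg by simp
    finally show "(\<Sum>A\<in>F. \<Prod>i\<in>A. r i) \<le> exp (infsum r S)" .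
  qed
qed

lemma not_summable_on_ge_pos_const:
  fixes f :: "'a \<Rightarrow> real"
  assumes "infinite A" "0 < \<delta>" "\<And>i. i \<in> A \<Longrightarrow> \<delta> \<le> f i"
  shows "\<not> f summable_on A"
proof
  assume summable: "f summable_on A"
  obtain N :: nat where N: "infsum f A / \<delta> < real N"
    using reals_Archimedean2 by blast
  obtain F where F: "F \<subseteq> A" "finite F" "card F = N"
    using infinite_arbitrarily_large[OF assms(1)] by blast
  have "\<delta> * real N \<le> (\<Sum>i\<in>F. f i)"
    using F assms(3) sum_mono[of F "\<lambda>_. \<delta>" f] by (auto simp: mult.commute)
  also have "\<dots> \<le> infsum f A"
    using F assms(2,3) by (intro finite_sum_le_infsum[OF summable]) (auto intro: order.trans[OF less_imp_le])
  finally show False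
    using N assms(2) by (simp add: field_simps)
qed

section \<open>Block decomposition of finite sets of integers\<close>

text \<open>A finite set of integers \<open>\<ge> b\<close> is coded by the lengths \<open>m\<^sub>1, m\<^sub>2, \<dots>\<close> of its maximal
  runs of consecutive integers and by offsets \<open>t\<^sub>1, t\<^sub>2, \<dots>\<close>: the first run is \<open>[t\<^sub>1, t\<^sub>1 + m\<^sub>1)\<close>
  and the remaining runs are coded relative to \<open>t\<^sub>1\<close>, so that the offsets range independently
  over intervals \<open>{b..}\<close>, \<open>{m\<^sub>1 + 1..}\<close>, \<dots>\<close>

fun blocks :: "nat list \<Rightarrow> int list \<Rightarrow> int set" where
  "blocks [] _ = {}"
| "blocks (m # ms) [] = {}"
| "blocks (m # ms) (t # ts) = (\<lambda>i. i + t) ` ({0..<int m} \<union> blocks ms ts)"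

fun admissible :: "int \<Rightarrow> nat list \<Rightarrow> int list \<Rightarrow> bool" where
  "admissible b [] ts \<longleftrightarrow> ts = []"
| "admissible b (m # ms) [] \<longleftrightarrow> False"
| "admissible b (m # ms) (t # ts) \<longleftrightarrow> 1 \<le> m \<and> b \<le> t \<and> admissible (int m + 1) ms ts"

definition walls :: "int set \<Rightarrow> int set" where
  "walls X = {w. (w \<in> X) \<noteq> (w + 1 \<in> X)}"

lemma mem_translate_iff: "x \<in> (\<lambda>i::int. i + t) ` S \<longleftrightarrow> x - t \<in> S"
  by (auto simp: image_iff) (metis diff_add_cancel)

lemma admissible_mono: "admissible b ms ts \<Longrightarrow> b' \<le> b \<Longrightarrow> admissible b' ms ts"
  by (cases ms; cases ts) auto

lemma admissible_imp_positive: "admissible b ms ts \<Longrightarrow> \<forall>x\<in>set ms. 1 \<le> x"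
  by (induction ms arbitrary: b ts) (auto elim: admissible.elims)

lemma admissible_Cons_set:
  "{ts. admissible b (m # ms) ts}
     = (\<lambda>(t, ts). t # ts) ` ({t. 1 \<le> m \<and> b \<le> t} \<times> {ts. admissible (int m + 1) ms ts})"
proof -
  have "ts \<in> (\<lambda>(t, ts). t # ts) ` ({t. 1 \<le> m \<and> b \<le> t} \<times> {ts. admissible (int m + 1) ms ts})"
    if "admissible b (m # ms) ts" for ts
    using that by (cases ts) (auto simp: image_iff)
  then show ?thesis by auto
qed

lemma finite_blocks: "finite (blocks ms ts)"
  by (induction ms ts rule: blocks.induct) auto

lemma blocks_subset_atLeast: "admissible b ms ts \<Longrightarrow> blocks ms ts \<subseteq> {b..}"
proof (induction ms arbitrary: b ts)
  case (Cons m ms)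
  then obtain t ts' where "ts = t # ts'" "1 \<le> m" "b \<le> t" "admissible (int m + 1) ms ts'"
    by (cases ts) auto
  with Cons.IH show ?case by fastforce
qed simp

lemma card_blocks: "admissible b ms ts \<Longrightarrow> card (blocks ms ts) = sum_list ms"
proof (induction ms arbitrary: b ts)
  case (Cons m ms)
  then obtain t ts' where ts: "ts = t # ts'" and adm: "admissible (int m + 1) ms ts'"
    by (cases ts) auto
  have "{0..<int m} \<inter> blocks ms ts' = {}"
    using blocks_subset_atLeast[OF adm] by auto
  then have "card ({0..<int m} \<union> blocks ms ts') = m + card (blocks ms ts')"
    by (subst card_Un_disjoint) (auto simp: finite_blocks)
  then show ?case
    using ts Cons.IH[OF adm] by (simp add: card_image inj_on_def)
qed simp

lemma blocks_Cons_first_block: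
  assumes "admissible b (m # ms) (t # ts)"
  shows "t \<in> blocks (m # ms) (t # ts)"
    and "\<And>i. i \<in> blocks (m # ms) (t # ts) \<Longrightarrow> t \<le> i"
    and "\<And>k. 0 \<le> k \<Longrightarrow> k < int m \<Longrightarrow> t + k \<in> blocks (m # ms) (t # ts)"
    and "t + int m \<notin> blocks (m # ms) (t # ts)"
proof -
  from assms have "1 \<le> m" and rest: "blocks ms ts \<subseteq> {int m + 1..}"
    using blocks_subset_atLeast by auto
  then show "t \<in> blocks (m # ms) (t # ts)"
    and "\<And>i. i \<in> blocks (m # ms) (t # ts) \<Longrightarrow> t \<le> i"
    and "\<And>k. 0 \<le> k \<Longrightarrow> k < int m \<Longrightarrow> t + k \<in> blocks (m # ms) (t # ts)"
    and "t + int m \<notin> blocks (m # ms) (t # ts)"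
    by (auto simp: mem_translate_iff)
qed

lemma blocks_Cons_rest:
  assumes "admissible b (m # ms) (t # ts)"
  shows "blocks ms ts = (\<lambda>i. i - t) ` blocks (m # ms) (t # ts) - {0..<int m}"
proof -
  have "blocks ms ts \<subseteq> {int m + 1..}"
    using assms blocks_subset_atLeast by auto
  moreover have "(\<lambda>i. i - t) ` (\<lambda>i. i + t) ` S = S" for S :: "int set"
    by (simp add: image_image)
  ultimately show ?thesis by auto
qed

lemma blocks_Cons_nonempty: "admissible b (m # ms) ts \<Longrightarrow> blocks (m # ms) ts \<noteq> {}"
  by (cases ts) (auto dest: blocks_Cons_first_block(1))

lemma admissible_succ_iff:
  assumes "admissible b ms ts" "ms \<noteq> []"
  shows "admissible (b + 1) ms ts \<longleftrightarrow> b \<notin> blocks ms ts"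
proof -
  obtain m ms' t ts' where e: "ms = m # ms'" "ts = t # ts'"
    using assms by (cases ms; cases ts) auto
  with assms have "b \<le> t" by simp
  note first = blocks_Cons_first_block[OF assms(1)[unfolded e]]
  have "b \<in> blocks ms ts \<longleftrightarrow> t = b"
    using first(1,2) \<open>b \<le> t\<close> unfolding e by (metis order.antisym)
  then show ?thesis
    using assms(1) \<open>b \<le> t\<close> unfolding e by auto
qed

lemma blocks_inj:
  "admissible b ms ts \<Longrightarrow> admissible b' ms' ts' \<Longrightarrow> blocks ms ts = blocks ms' ts'
    \<Longrightarrow> ms = ms' \<and> ts = ts'"
proof (induction ms arbitrary: b ts b' ms' ts')
  case Nil
  then show ?case
    by (cases ms') (auto dest: blocks_Cons_nonempty)
next
  case (Cons m ms)
  obtain t ts0 where ts: "ts = t # ts0"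
    using Cons.prems(1) by (cases ts) auto
  obtain m' ms0 t' ts0' where ms': "ms' = m' # ms0" and ts': "ts' = t' # ts0'"
    using Cons.prems blocks_Cons_nonempty by (cases ms'; cases ts') fastforce+
  note adm = Cons.prems(1)[unfolded ts] and adm' = Cons.prems(2)[unfolded ms' ts']
  note first = blocks_Cons_first_block[OF adm] and first' = blocks_Cons_first_block[OF adm']
  note eq = Cons.prems(3)[unfolded ts ms' ts']
  have "t = t'"
    using first(1,2) first'(1,2) eq by (metis order.antisym)
  moreover have "m = m'"
  proof (rule ccontr)
    assume "m \<noteq> m'"
    then consider "int m < int m'" | "int m' < int m" by linarith
    then show False
      using first(3,4) first'(3,4) eq \<open>t = t'\<close> by cases (metis of_nat_0_le_iff)+
  qed
  moreover have "blocks ms ts0 = blocks ms0 ts0'"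
    using blocks_Cons_rest[OF adm] blocks_Cons_rest[OF adm'] eq \<open>t = t'\<close> \<open>m = m'\<close> by simp
  ultimately show ?case
    using Cons.IH adm adm' ts ms' ts' by auto
qed

lemma maximal_run_exists:
  fixes X :: "int set"
  assumes "finite X" "t \<in> X"
  obtains m :: nat where "1 \<le> m" "t + int m \<notin> X" "\<And>k. k < m \<Longrightarrow> t + int k \<in> X"
proof -
  have "\<exists>k::nat. t + int k \<notin> X"
  proof (rule ccontr)
    assume "\<not> ?thesis"
    then have "range (\<lambda>k::nat. t + int k) \<subseteq> X" by auto
    moreover have "inj (\<lambda>k::nat. t + int k)" by (simp add: inj_def)
    ultimately show False
      using assms(1) finite_imageD finite_subset infinite_UNIV_nat by blast
  qed
  then obtain m :: nat where "t + int m \<notin> X" "\<And>k. k < m \<Longrightarrow> t + int k \<in> X"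
    using exists_least_iff[of "\<lambda>k. t + int k \<notin> X"] by blast
  moreover have "1 \<le> m" using assms(2) calculation(1) by (cases m) auto
  ultimately show ?thesis using that by blast
qed

lemma blocks_surj:
  "finite X \<Longrightarrow> X \<subseteq> {b..} \<Longrightarrow> \<exists>ms ts. admissible b ms ts \<and> blocks ms ts = X"
proof (induction "card X" arbitrary: X b rule: less_induct)
  case less
  show ?case
  proof (cases "X = {}")
    case True
    then show ?thesis by (intro exI[of _ "[]"]) auto
  next
    case False
    define t where "t = Min X"
    have tX: "t \<in> X" and t_min: "\<And>i. i \<in> X \<Longrightarrow> t \<le> i" and "b \<le> t"
      using False less.prems by (auto simp: t_def)
    obtain m where "1 \<le> m" and m_notin: "t + int m \<notin> X" and run: "\<And>k. k < m \<Longrightarrow> t + int k \<in> X"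
      using maximal_run_exists[OF less.prems(1) tX] by blast
    define Y where "Y = (\<lambda>i. i - t) ` X - {0..<int m}"
    have Y_ge: "Y \<subseteq> {int m + 1..}"
    proof
      fix z assume "z \<in> Y"
      then obtain i where i: "i \<in> X" "z = i - t" "\<not> (0 \<le> z \<and> z < int m)"
        by (auto simp: Y_def)
      moreover have "i \<noteq> t + int m" using m_notin i(1) by auto
      ultimately show "z \<in> {int m + 1..}" using t_min[OF i(1)] by auto
    qed
    have "0 \<in> (\<lambda>i. i - t) ` X - Y"
      using tX \<open>1 \<le> m\<close> by (force simp: Y_def)
    then have "Y \<subset> (\<lambda>i. i - t) ` X"
      unfolding Y_def by blast
    then have "card Y < card ((\<lambda>i. i - t) ` X)"
      using less.prems(1) by (intro psubset_card_mono) auto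
    also have "\<dots> = card X" by (rule card_image) (simp add: inj_on_def)
    finally obtain ms ts where adm: "admissible (int m + 1) ms ts" and "blocks ms ts = Y"
      using less.hyps Y_ge less.prems(1) by (metis Y_def finite_Diff finite_imageI)
    moreover have "x \<in> X" if "0 \<le> x - t" "x - t < int m" for x
      using run[of "nat (x - t)"] that by simp
    ultimately have "blocks (m # ms) (t # ts) = X"
      by (auto simp: mem_translate_iff Y_def image_iff)
    then show ?thesis
      using adm \<open>1 \<le> m\<close> \<open>b \<le> t\<close> by (intro exI[of _ "m # ms"] exI[of _ "t # ts"]) simp
  qed
qed

lemma walls_translate: "walls ((\<lambda>i. i + t) ` X) = (\<lambda>i. i + t) ` walls X"
proof -
  have "w \<in> walls ((\<lambda>i. i + t) ` X) \<longleftrightarrow> w \<in> (\<lambda>i. i + t) ` walls X" for w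
    unfolding mem_translate_iff walls_def by (simp add: algebra_simps)
  then show ?thesis by blast
qed

lemma walls_uminus: "walls (uminus ` X) = (\<lambda>v. - v - 1) ` walls X"
proof -
  have mem: "x \<in> uminus ` S \<longleftrightarrow> - x \<in> S" for x :: int and S
    by (auto simp: image_iff) (metis minus_minus)
  have "w \<in> walls (uminus ` X) \<longleftrightarrow> - w - 1 \<in> walls X" for w
    unfolding walls_def mem by auto
  moreover have "w \<in> (\<lambda>v. - v - 1) ` walls X \<longleftrightarrow> - w - 1 \<in> walls X" for w
    by (auto simp: image_iff) (metis add.inverse_inverse diff_add_cancel minus_diff_eq uminus_add_conv_diff)
  ultimately show ?thesis by blast
qed

lemma walls_Un_block:
  assumes "Y \<subseteq> {int m + 1..}" "1 \<le> m"
  shows "walls ({0..<int m} \<union> Y) = {-1, int m - 1} \<union> walls Y"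
proof -
  have "w \<in> walls ({0..<int m} \<union> Y) \<longleftrightarrow> w \<in> {-1, int m - 1} \<union> walls Y" for w
  proof (cases "w \<le> int m - 1")
    case True
    then have "w \<notin> Y" "w + 1 \<notin> Y" using assms by auto
    then show ?thesis using True assms unfolding walls_def by auto
  qed (use assms in \<open>auto simp: walls_def\<close>)
  then show ?thesis by blast
qed

lemma walls_subset_atLeast: "X \<subseteq> {c..} \<Longrightarrow> walls X \<subseteq> {c - 1..}"
  unfolding walls_def by force

lemma walls_subset_atMost: "X \<subseteq> {..c} \<Longrightarrow> walls X \<subseteq> {..c}"
  unfolding walls_def by force

lemma walls_subset: "walls X \<subseteq> X \<union> (\<lambda>i. i - 1) ` X"
  unfolding walls_def by (auto simp: image_iff) (metis add_diff_cancel_right')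

lemma finite_walls: "finite X \<Longrightarrow> finite (walls X)"
  using walls_subset finite_subset by blast

lemma card_walls_le: "finite X \<Longrightarrow> card (walls X) \<le> 2 * card X"
proof -
  assume "finite X"
  then have "card (walls X) \<le> card (X \<union> (\<lambda>i. i - 1) ` X)"
    by (intro card_mono walls_subset) auto
  also have "\<dots> \<le> card X + card ((\<lambda>i. i - 1) ` X)" by (rule card_Un_le)
  also have "\<dots> \<le> 2 * card X" using card_image_le[OF \<open>finite X\<close>] by simp
  finally show ?thesis .
qed

lemma walls_blocks_Cons:
  assumes "admissible b (m # ms) (t # ts)"
  shows "walls (blocks (m # ms) (t # ts)) = (\<lambda>i. i + t) ` ({-1, int m - 1} \<union> walls (blocks ms ts))"
    and "{-1, int m - 1} \<inter> walls (blocks ms ts) = {}"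
    and "int m - 1 \<noteq> -1"
proof -
  from assms have "1 \<le> m" and rest: "blocks ms ts \<subseteq> {int m + 1..}"
    using blocks_subset_atLeast by auto
  then show "walls (blocks (m # ms) (t # ts)) = (\<lambda>i. i + t) ` ({-1, int m - 1} \<union> walls (blocks ms ts))"
    by (simp add: walls_translate walls_Un_block)
  show "{-1, int m - 1} \<inter> walls (blocks ms ts) = {}" "int m - 1 \<noteq> -1"
    using walls_subset_atLeast[OF rest] \<open>1 \<le> m\<close> by auto
qed

lemma card_walls_blocks: "admissible b ms ts \<Longrightarrow> card (walls (blocks ms ts)) = 2 * length ms"
proof (induction ms arbitrary: b ts)
  case Nil
  then show ?case by (simp add: walls_def)
next
  case (Cons m ms)
  then obtain t ts' where ts: "ts = t # ts'" and adm: "admissible (int m + 1) ms ts'"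
    by (cases ts) auto
  note w = walls_blocks_Cons[OF Cons.prems[unfolded ts]]
  have "card (walls (blocks (m # ms) ts)) = card ({-1, int m - 1} \<union> walls (blocks ms ts'))"
    unfolding ts w(1) by (rule card_image) (simp add: inj_on_def)
  also have "\<dots> = 2 + card (walls (blocks ms ts'))"
    using w(2,3) by (subst card_Un_disjoint) (auto simp: finite_walls finite_blocks)
  finally show ?case using Cons.IH[OF adm] by simp
qed

lemma sum_walls_blocks_Cons:
  assumes "admissible b (m # ms) (t # ts)"
  shows "(\<Sum>w\<in>walls (blocks (m # ms) (t # ts)). real_of_int w)
    = real_of_int t * (2 + 2 * real (length ms)) + (real m - 2) + (\<Sum>w\<in>walls (blocks ms ts). real_of_int w)"
proof -
  note w = walls_blocks_Cons[OF assms]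
  have adm: "admissible (int m + 1) ms ts" using assms by simp
  have "(\<Sum>w\<in>walls (blocks (m # ms) (t # ts)). real_of_int w)
      = (\<Sum>w\<in>{-1, int m - 1} \<union> walls (blocks ms ts). real_of_int w + real_of_int t)"
    unfolding w(1) by (subst sum.reindex) (auto simp: inj_on_def)
  also have "\<dots> = (\<Sum>w\<in>{-1, int m - 1}. real_of_int w + real_of_int t)
      + (\<Sum>w\<in>walls (blocks ms ts). real_of_int w + real_of_int t)"
    using w(2) by (subst sum.union_disjoint) (auto simp: finite_walls finite_blocks)
  also have "\<dots> = 2 * real_of_int t + real m - 2
      + ((\<Sum>w\<in>walls (blocks ms ts). real_of_int w) + real_of_int t * 2 * real (length ms))"
    using w(3) by (simp add: sum.distrib card_walls_blocks[OF adm])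
  finally show ?thesis by (simp add: algebra_simps)
qed

lemma sum_blocks_Cons:
  assumes "admissible b (m # ms) (t # ts)"
  shows "(\<Sum>i\<in>blocks (m # ms) (t # ts). real_of_int i)
    = real_of_int t * (real m + real (sum_list ms)) + real m * (real m - 1) / 2
      + (\<Sum>i\<in>blocks ms ts. real_of_int i)"
proof -
  have adm: "admissible (int m + 1) ms ts" using assms by simp
  have "{0..<int m} \<inter> blocks ms ts = {}"
    using blocks_subset_atLeast[OF adm] by auto
  then have "(\<Sum>i\<in>blocks (m # ms) (t # ts). real_of_int i)
      = (\<Sum>i\<in>{0..<int m}. real_of_int i + real_of_int t) + (\<Sum>i\<in>blocks ms ts. real_of_int i + real_of_int t)"
    by (simp add: sum.reindex inj_on_def sum.union_disjoint finite_blocks)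
  also have "\<dots> = real m * (real m - 1) / 2 + real_of_int t * real m
      + ((\<Sum>i\<in>blocks ms ts. real_of_int i) + real_of_int t * real (sum_list ms))"
    by (simp add: sum.distrib sum_atLeastLessThan_int_real card_blocks[OF adm])
  finally show ?thesis by (simp add: algebra_simps)
qed

section \<open>Geometric sums over block codes\<close>

text \<open>With \<open>e = 1\<close> this is the factor of the weight contributed by the minus spins \<open>X \<subseteq> {1..}\<close>;
  with \<open>e = -1\<close> it is that of the plus spins \<open>-X \<subseteq> {..0}\<close>, up to the factor \<open>y powr (- card (walls X) / 2)\<close>
  coming from the shift in \<open>walls_uminus\<close>.\<close>

definition set_weight :: "real \<Rightarrow> real \<Rightarrow> real \<Rightarrow> int set \<Rightarrow> real" where
  "set_weight y Q e X = Q powr (\<Sum>i\<in>X. real_of_int i) * y powr (e * (\<Sum>w\<in>walls X. real_of_int w) / 2)"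

definition block_ratio :: "real \<Rightarrow> real \<Rightarrow> real \<Rightarrow> nat list \<Rightarrow> real" where
  "block_ratio y Q e ms = y powr (e * real (length ms)) * Q powr real (sum_list ms)"

text \<open>The factor \<open>x powr b / (1 - x)\<close> with \<open>x = block_ratio y Q e (m # ms)\<close> is the geometric series
  over the offset \<open>t \<ge> b\<close> of the first run.\<close>

fun block_factor :: "real \<Rightarrow> real \<Rightarrow> real \<Rightarrow> int \<Rightarrow> nat list \<Rightarrow> real" where
  "block_factor y Q e b [] = 1"
| "block_factor y Q e b (m # ms) =
     block_ratio y Q e (m # ms) powr real_of_int b / (1 - block_ratio y Q e (m # ms))
     * Q powr (real m * (real m - 1) / 2) * block_factor y Q e (int m + 1) ms"

definition block_sum :: "real \<Rightarrow> real \<Rightarrow> real \<Rightarrow> int \<Rightarrow> nat list \<Rightarrow> real" where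
  "block_sum y Q e b ms = y powr (e * (real (sum_list ms) - 2 * real (length ms)) / 2) * block_factor y Q e b ms"

lemma set_weight_nonneg: "0 \<le> set_weight y Q e X"
  by (simp add: set_weight_def)

lemma set_weight_blocks_Cons:
  assumes "admissible b (m # ms) (t # ts)" "0 < Q" "0 < y"
  shows "set_weight y Q e (blocks (m # ms) (t # ts))
    = block_ratio y Q e (m # ms) powr real_of_int t
      * (Q powr (real m * (real m - 1) / 2) * y powr (e * (real m - 2) / 2) * set_weight y Q e (blocks ms ts))"
proof -
  define S where "S = (\<Sum>i\<in>blocks ms ts. real_of_int i)"
  define W where "W = (\<Sum>w\<in>walls (blocks ms ts). real_of_int w)"
  have "set_weight y Q e (blocks (m # ms) (t # ts))
      = Q powr (real_of_int t * (real m + real (sum_list ms)) + real m * (real m - 1) / 2 + S)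
        * y powr (e * real_of_int t * (1 + real (length ms)) + e * (real m - 2) / 2 + e * W / 2)"
    unfolding set_weight_def sum_blocks_Cons[OF assms(1)] sum_walls_blocks_Cons[OF assms(1)] S_def W_def
    by (simp add: field_simps)
  also have "\<dots> = (Q powr (real_of_int t * (real m + real (sum_list ms))) * y powr (e * real_of_int t * (1 + real (length ms))))
      * (Q powr (real m * (real m - 1) / 2) * y powr (e * (real m - 2) / 2) * (Q powr S * y powr (e * W / 2)))"
    by (simp only: powr_add mult_ac)
  also have "Q powr (real_of_int t * (real m + real (sum_list ms))) * y powr (e * real_of_int t * (1 + real (length ms)))
      = block_ratio y Q e (m # ms) powr real_of_int t"
    using assms(2,3) by (simp add: block_ratio_def powr_mult powr_powr algebra_simps)
  finally show ?thesis unfolding set_weight_def S_def W_def .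
qed

lemma has_sum_set_weight_blocks:
  assumes Q: "0 < Q" and y: "0 < y"
    and ratio_lt_1: "\<And>k s. 1 \<le> k \<Longrightarrow> k \<le> s \<Longrightarrow> y powr (e * real k) * Q powr real s < 1"
    and pos: "\<forall>x\<in>set ms. 1 \<le> x"
  shows "((\<lambda>ts. set_weight y Q e (blocks ms ts)) has_sum block_sum y Q e b ms) {ts. admissible b ms ts}"
  using pos
proof (induction ms arbitrary: b)
  case Nil
  have "{ts. admissible b [] ts} = {[]}" by auto
  then show ?case using has_sum_finite[of "{[]}"] Q y by (simp add: set_weight_def walls_def block_sum_def)
next
  case (Cons m ms)
  define x where "x = block_ratio y Q e (m # ms)"
  define c where "c = Q powr (real m * (real m - 1) / 2) * y powr (e * (real m - 2) / 2)"
  define s where "s = block_sum y Q e (int m + 1) ms"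
  have "1 \<le> m" "length ms \<le> sum_list ms"
    using Cons.prems length_le_sum_list by auto
  then have "0 < x" "x < 1"
    unfolding x_def block_ratio_def using Q y ratio_lt_1[of "length (m # ms)" "sum_list (m # ms)"] by auto
  then have geom: "((\<lambda>t. x powr real_of_int t) has_sum (x powr real_of_int b / (1 - x))) {b..}"
    by (rule has_sum_powr_atLeast_int)
  have rest: "((\<lambda>ts. c * set_weight y Q e (blocks ms ts)) has_sum (c * s)) {ts. admissible (int m + 1) ms ts}"
    using has_sum_cmult_right[OF Cons.IH] Cons.prems by (simp add: s_def)
  have "((\<lambda>(t, ts). x powr real_of_int t * (c * set_weight y Q e (blocks ms ts))) has_sum
      (x powr real_of_int b / (1 - x) * (c * s))) ({b..} \<times> {ts. admissible (int m + 1) ms ts})"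
    by (rule has_sum_mult_nonneg[OF geom rest]) (auto simp: c_def set_weight_nonneg)
  also have "?this \<longleftrightarrow> ((\<lambda>ts. set_weight y Q e (blocks (m # ms) ts)) has_sum
      (x powr real_of_int b / (1 - x) * (c * s))) {ts. admissible b (m # ms) ts}"
    unfolding admissible_Cons_set using \<open>1 \<le> m\<close>
    by (intro has_sum_reindex_bij_witness[of _ "\<lambda>ts. (hd ts, tl ts)" "\<lambda>(t, ts). t # ts"])
      (auto simp: set_weight_blocks_Cons Q y x_def c_def simp del: blocks.simps)
  also have "x powr real_of_int b / (1 - x) * (c * s)
      = y powr (e * (real m - 2) / 2 + e * (real (sum_list ms) - 2 * real (length ms)) / 2)
        * block_factor y Q e b (m # ms)"
    by (simp add: x_def c_def s_def block_sum_def powr_add)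
  also have "e * (real m - 2) / 2 + e * (real (sum_list ms) - 2 * real (length ms)) / 2
      = e * (real (sum_list (m # ms)) - 2 * real (length (m # ms))) / 2"
    by (simp add: field_simps)
  finally show ?case
    by (simp only: block_sum_def)
qed

lemma ratio_lt_1_right:
  assumes "0 < Q" "Q < 1" "0 < y" "y \<le> 1" "1 \<le> k" "k \<le> s"
  shows "y powr (1 * real k) * Q powr real s < 1"
proof -
  have "y powr (1 * real k) \<le> 1" "Q powr real s < 1"
    using assms by (simp_all add: powr_realpow power_less_one_iff power_le_one)
  moreover have "y powr (1 * real k) * Q powr real s \<le> Q powr real s"
    using \<open>y powr (1 * real k) \<le> 1\<close> by (intro mult_left_le_one_le) auto
  ultimately show ?thesis by linarith
qed

lemma ratio_lt_1_left:
  assumes "0 < Q" "Q < y" "Q < 1" "1 \<le> k" "k \<le> s"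
  shows "y powr (-1 * real k) * Q powr real s < 1"
proof -
  have "Q powr real s \<le> Q powr real k"
    using assms by (simp add: powr_realpow power_decreasing)
  then have "y powr (-1 * real k) * Q powr real s \<le> y powr (-1 * real k) * Q powr real k"
    by (intro mult_left_mono) auto
  also have "\<dots> = (Q / y) ^ k"
    using assms by (simp add: powr_minus powr_realpow divide_inverse power_mult_distrib power_inverse mult.commute)
  also have "\<dots> < 1"
    using assms by (simp add: power_less_one_iff)
  finally show ?thesis .
qed

lemma block_sum_Cons_succ:
  "block_sum y Q e (b + 1) (m # ms) = block_ratio y Q e (m # ms) * block_sum y Q e b (m # ms)"
  unfolding block_sum_def by (simp add: powr_add block_ratio_def mult_ac)

lemma tailsum_Cons: "1 \<le> j \<Longrightarrow> tailsum (m # ms) (Suc j) = tailsum ms j"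
proof -
  assume "1 \<le> j"
  have "tailsum (m # ms) (Suc j) = (\<Sum>k\<in>{Suc j..Suc (length ms)}. (m # ms) ! (k - 1))"
    unfolding tailsum_def by simp
  also have "\<dots> = (\<Sum>k\<in>{j..length ms}. (m # ms) ! k)"
    by (subst sum.shift_bounds_cl_Suc_ivl) simp
  also have "\<dots> = tailsum ms j"
    unfolding tailsum_def by (rule sum.cong) (use \<open>1 \<le> j\<close> in \<open>auto simp: nth_Cons'\<close>)
  finally show ?thesis .
qed

lemma tailsum_1: "tailsum ms 1 = sum_list ms"
proof -
  have "tailsum ms 1 = (\<Sum>k\<in>{0..<length ms}. ms ! k)"
    unfolding tailsum_def by (rule sum.reindex_bij_witness[of _ Suc "\<lambda>k. k - 1"]) auto
  then show ?thesis by (simp add: sum_list_sum_nth)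
qed

lemma tailsum_eq_sum_list_drop: "1 \<le> j \<Longrightarrow> tailsum ms j = sum_list (drop (j - 1) ms)"
proof (induction ms arbitrary: j)
  case Nil
  then show ?case by (simp add: tailsum_def)
next
  case (Cons m ms)
  show ?case
  proof (cases "j = 1")
    case True
    then show ?thesis using tailsum_1[of "m # ms"] by simp
  next
    case False
    then obtain i where "j = Suc i" "1 \<le> i" using Cons.prems by (cases j) auto
    with Cons.IH[of i] show ?thesis by (simp add: tailsum_Cons drop_Cons')
  qed
qed

lemma block_factor_eq_prod:
  "block_factor y Q e b ms = (\<Prod>j\<in>{1..length ms}.
     Q powr (real (ms ! (j - 1)) * (real (ms ! (j - 1)) - 1) / 2)
     * block_ratio y Q e (drop (j - 1) ms) powr (if j = 1 then real_of_int b else real (ms ! (j - 2)) + 1)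
     / (1 - block_ratio y Q e (drop (j - 1) ms)))"
proof (induction ms arbitrary: b)
  case (Cons m ms)
  define g where "g = (\<lambda>j. Q powr (real ((m # ms) ! (j - 1)) * (real ((m # ms) ! (j - 1)) - 1) / 2)
     * block_ratio y Q e (drop (j - 1) (m # ms)) powr (if j = 1 then real_of_int b else real ((m # ms) ! (j - 2)) + 1)
     / (1 - block_ratio y Q e (drop (j - 1) (m # ms))))"
  have "(\<Prod>j\<in>{1..Suc (length ms)}. g j) = g 1 * (\<Prod>j\<in>{Suc 1..Suc (length ms)}. g j)"
    by (subst prod.atLeast_Suc_atMost) auto
  also have "\<dots> = g 1 * (\<Prod>j\<in>{1..length ms}. g (Suc j))"
    by (simp only: prod.shift_bounds_cl_Suc_ivl)
  also have "(\<Prod>j\<in>{1..length ms}. g (Suc j)) = block_factor y Q e (int m + 1) ms"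
    unfolding Cons.IH g_def
    by (rule prod.cong) (auto simp: nth_Cons' drop_Cons' numeral_2_eq_2)
  finally show ?case by (simp add: g_def)
qed simp

lemma right_factor_eq_block_factor: "right_factor y Q ms = block_factor y Q 1 1 ms"
  unfolding right_factor_def block_factor_eq_prod
  by (rule prod.cong)
    (auto simp: block_ratio_def tailsum_eq_sum_list_drop seqv_def Let_def numeral_2_eq_2 algebra_simps)

lemma left_factor_eq_block_factor: "left_factor y Q ls = block_factor y Q (-1) 0 ls"
  unfolding left_factor_def block_factor_eq_prod
  by (rule prod.cong)
    (auto simp: block_ratio_def tailsum_eq_sum_list_drop seqv_def Let_def numeral_2_eq_2 algebra_simps)

section \<open>Configurations with finitely many defects\<close>

definition config :: "int set \<Rightarrow> int set \<Rightarrow> int \<Rightarrow> int" where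
  "config A B = (\<lambda>i. if i \<le> 0 then (if i \<in> B then 1 else -1) else (if i \<in> A then -1 else 1))"

definition right_minus :: "(int \<Rightarrow> int) \<Rightarrow> int set" where
  "right_minus \<sigma> = {i. 1 \<le> i \<and> \<sigma> i = -1}"

definition left_plus :: "(int \<Rightarrow> int) \<Rightarrow> int set" where
  "left_plus \<sigma> = {i. i \<le> 0 \<and> \<sigma> i = 1}"

definition defect_sets :: "(int set \<times> int set) set" where
  "defect_sets = {A. finite A \<and> A \<subseteq> {1..}} \<times> {B. finite B \<and> B \<subseteq> {..0}}"

lemma right_minus_config: "A \<subseteq> {1..} \<Longrightarrow> right_minus (config A B) = A"
  unfolding right_minus_def config_def by auto

lemma left_plus_config: "B \<subseteq> {..0} \<Longrightarrow> left_plus (config A B) = B"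
  unfolding left_plus_def config_def by auto

lemma config_in_B_set:
  assumes "finite A" "A \<subseteq> {1..}" "finite B" "B \<subseteq> {..0}"
  shows "config A B \<in> B_set"
proof -
  define a where "a = Min (insert 0 B) - 1"
  define b where "b = Max (insert 0 A) + 1"
  have lower: "a < i" if "i \<in> B" for i
  proof -
    have "Min (insert 0 B) \<le> i" by (rule Min_le) (use assms(3) that in auto)
    then show ?thesis by (simp add: a_def)
  qed
  have upper: "i < b" if "i \<in> A" for i
  proof -
    have "i \<le> Max (insert 0 A)" by (rule Max_ge) (use assms(1) that in auto)
    then show ?thesis by (simp add: b_def)
  qed
  have "a \<le> 0" "0 < b"
    using assms(1,3) by (simp_all add: a_def b_def Min_le_iff Max_ge_iff)
  have "config A B (a - int i) = -1 \<and> config A B (b + int i) = 1" for i :: nat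
  proof -
    have "a - int i \<notin> B" "b + int i \<notin> A"
      using lower upper by force+
    then show ?thesis using \<open>a \<le> 0\<close> \<open>0 < b\<close> by (simp add: config_def)
  qed
  moreover have "config A B \<in> spin_configs"
    unfolding spin_configs_def config_def by auto
  ultimately show ?thesis
    unfolding B_set_def by blast
qed

lemma B_set_config_decomp:
  assumes "\<sigma> \<in> B_set"
  shows "(right_minus \<sigma>, left_plus \<sigma>) \<in> defect_sets" and "\<sigma> = config (right_minus \<sigma>) (left_plus \<sigma>)"
proof -
  from assms obtain a b where ab: "\<forall>i::nat. \<sigma> (a - int i) = -1 \<and> \<sigma> (b + int i) = 1"
    and spin: "\<forall>i. \<sigma> i = -1 \<or> \<sigma> i = 1"
    unfolding B_set_def spin_configs_def by auto
  have "right_minus \<sigma> \<subseteq> {1..<b}"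
  proof
    fix i assume i: "i \<in> right_minus \<sigma>"
    have "i < b"
      using i ab[rule_format, of "nat (i - b)"] by (cases "i < b") (auto simp: right_minus_def)
    then show "i \<in> {1..<b}" using i by (simp add: right_minus_def)
  qed
  moreover have "left_plus \<sigma> \<subseteq> {a<..0}"
  proof
    fix i assume i: "i \<in> left_plus \<sigma>"
    have "a < i"
      using i ab[rule_format, of "nat (a - i)"] by (cases "a < i") (auto simp: left_plus_def)
    then show "i \<in> {a<..0}" using i by (simp add: left_plus_def)
  qed
  ultimately show "(right_minus \<sigma>, left_plus \<sigma>) \<in> defect_sets"
    unfolding defect_sets_def by (auto intro: finite_subset)
  show "\<sigma> = config (right_minus \<sigma>) (left_plus \<sigma>)"
    using spin by (force simp: config_def right_minus_def left_plus_def)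
qed

lemma B_set_eq_config_image: "B_set = (\<lambda>(A, B). config A B) ` defect_sets"
proof
  show "B_set \<subseteq> (\<lambda>(A, B). config A B) ` defect_sets"
  proof
    fix \<sigma> assume "\<sigma> \<in> B_set"
    with B_set_config_decomp show "\<sigma> \<in> (\<lambda>(A, B). config A B) ` defect_sets"
      by (auto intro!: image_eqI[where x = "(right_minus \<sigma>, left_plus \<sigma>)"])
  qed
  show "(\<lambda>(A, B). config A B) ` defect_sets \<subseteq> B_set"
    unfolding defect_sets_def using config_in_B_set by auto
qed

lemma inj_on_config: "inj_on (\<lambda>(A, B). config A B) defect_sets"
proof (rule inj_onI, clarify)
  fix A B A' B' assume "(A, B) \<in> defect_sets" "(A', B') \<in> defect_sets" "config A B = config A' B'"
  then show "A = A' \<and> B = B'"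
    using right_minus_config[of A B] right_minus_config[of A' B'] left_plus_config[of B A]
      left_plus_config[of B' A'] by (simp add: defect_sets_def)
qed

lemma Ncount_config:
  "A \<subseteq> {1..} \<Longrightarrow> B \<subseteq> {..0} \<Longrightarrow> Ncount (config A B) = int (card A) - int (card B)"
  using right_minus_config[of A B] left_plus_config[of B A]
  unfolding Ncount_def right_minus_def left_plus_def by simp

lemma fc_config:
  assumes "A \<subseteq> {1..}" "B \<subseteq> {..0}"
  shows "fc c (config A B) = 2 * (\<Sum>i\<in>A. real_of_int i - c) - 2 * (\<Sum>i\<in>B. real_of_int i - c)"
proof -
  have "{i. i \<ge> 1 \<and> config A B i = -1} = A" "{i. i \<le> 0 \<and> config A B i = 1} = B"
    using assms unfolding config_def by auto
  then show ?thesis unfolding fc_def by simp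
qed

lemma domain_walls_config:
  assumes "A \<subseteq> {1..}" "B \<subseteq> {..0}"
  shows "{i. config A B i \<noteq> config A B (i + 1)}
    = (walls A - {0}) \<union> (walls B - {0}) \<union> (if (0 \<in> B) = (1 \<in> A) then {0} else {})"
proof -
  have "i \<in> {i. config A B i \<noteq> config A B (i + 1)}
    \<longleftrightarrow> i \<in> (walls A - {0}) \<union> (walls B - {0}) \<union> (if (0 \<in> B) = (1 \<in> A) then {0} else {})" for i
  proof -
    consider "1 \<le> i" | "i = 0" | "i \<le> -1" by linarith
    then show ?thesis
    proof cases
      case 1
      then have "i \<notin> B" "i + 1 \<notin> B" using assms by auto
      then show ?thesis using 1 unfolding config_def walls_def by auto
    next
      case 2
      have "0 \<notin> A" using assms by auto
      then show ?thesis using 2 unfolding config_def walls_def by auto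
    next
      case 3
      then have "i \<notin> A" "i + 1 \<notin> A" using assms by auto
      then show ?thesis using 3 unfolding config_def walls_def by auto
    qed
  qed
  then show ?thesis by blast
qed

lemma
  assumes "finite A" "A \<subseteq> {1..}" "finite B" "B \<subseteq> {..0}"
  shows H_config: "H (\<lambda>i. real_of_int i) (config A B)
      = (\<Sum>w\<in>walls A. real_of_int w) + (\<Sum>w\<in>walls B. real_of_int w)"
    and H1_config: "H1 (config A B)
      = real (card (walls A - {0}) + card (walls B - {0})) + (if (0 \<in> B) = (1 \<in> A) then 1 else 0)"
proof -
  define Z where "Z = (if (0 \<in> B) = (1 \<in> A) then {0::int} else {})"
  have fin: "finite (walls A)" "finite (walls B)" "finite Z"
    using assms finite_walls by (auto simp: Z_def)
  have "walls A \<subseteq> {0..}" "walls B \<subseteq> {..0}"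
    using walls_subset_atLeast[OF assms(2)] walls_subset_atMost[OF assms(4)] by auto
  then have "walls A \<inter> walls B \<subseteq> {0}"
    by fastforce
  then have disj: "(walls A - {0}) \<inter> (walls B - {0}) = {}" "((walls A - {0}) \<union> (walls B - {0})) \<inter> Z = {}"
    by (auto simp: Z_def)
  have walls_eq: "{i. config A B i \<noteq> config A B (i + 1)} = (walls A - {0}) \<union> (walls B - {0}) \<union> Z"
    using domain_walls_config[OF assms(2,4)] by (simp add: Z_def)
  have "H (\<lambda>i. real_of_int i) (config A B)
      = (\<Sum>w\<in>walls A - {0}. real_of_int w) + (\<Sum>w\<in>walls B - {0}. real_of_int w) + (\<Sum>w\<in>Z. real_of_int w)"
    unfolding H_def walls_eq using disj fin by (simp add: sum.union_disjoint)
  then show "H (\<lambda>i. real_of_int i) (config A B) = (\<Sum>w\<in>walls A. real_of_int w) + (\<Sum>w\<in>walls B. real_of_int w)"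
    using fin by (simp add: Z_def sum_diff1)
  have "H1 (config A B) = real (card (walls A - {0}) + card (walls B - {0}) + card Z)"
    unfolding H1_def H_def walls_eq using disj fin by (simp add: card_Un_disjoint)
  then show "H1 (config A B)
      = real (card (walls A - {0}) + card (walls B - {0})) + (if (0 \<in> B) = (1 \<in> A) then 1 else 0)"
    by (simp add: Z_def)
qed

lemma weight_config_mirror:
  assumes "0 < q" "Q = q^2" "y = exp (-2 * \<beta>)"
    and A: "finite A" "A \<subseteq> {1..}" and B: "finite B" "B \<subseteq> {0..}" and "card A = card B"
  shows "weight (\<lambda>i. real_of_int i) \<beta> q c (config A (uminus ` B))
    = set_weight y Q 1 A * set_weight y Q (-1) B * y powr (- real (card (walls B)) / 2)"
proof -
  have B': "finite (uminus ` B)" "uminus ` B \<subseteq> {..0}" using B by auto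
  have inj: "inj_on uminus B" "inj_on (\<lambda>v::int. - v - 1) (walls B)" by (simp_all add: inj_on_def)
  have fc_eq: "fc c (config A (uminus ` B)) = 2 * ((\<Sum>i\<in>A. real_of_int i) + (\<Sum>i\<in>B. real_of_int i))"
    using fc_config[OF A(2) B'(2)] \<open>card A = card B\<close>
    by (simp add: sum.reindex[OF inj(1)] card_image[OF inj(1)] sum_subtractf sum_negf algebra_simps)
  have q_eq: "q powr fc c (config A (uminus ` B)) = Q powr (\<Sum>i\<in>A. real_of_int i) * Q powr (\<Sum>i\<in>B. real_of_int i)"
    unfolding fc_eq distrib_left powr_add powr_two_times[OF assms(1)] assms(2) ..
  have "H (\<lambda>i. real_of_int i) (config A (uminus ` B))
      = (\<Sum>w\<in>walls A. real_of_int w) - (\<Sum>w\<in>walls B. real_of_int w) - real (card (walls B))"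
    unfolding H_config[OF A B'] walls_uminus
    by (simp add: sum.reindex[OF inj(2)] sum_subtractf sum_negf)
  moreover have y_powr: "y powr a = exp (- 2 * \<beta> * a)" for a
    unfolding assms(3) by (simp add: powr_def)
  ultimately have "exp (- \<beta> * H (\<lambda>i. real_of_int i) (config A (uminus ` B)))
      = y powr (1 * (\<Sum>w\<in>walls A. real_of_int w) / 2) * y powr (- 1 * (\<Sum>w\<in>walls B. real_of_int w) / 2)
        * y powr (- real (card (walls B)) / 2)"
    unfolding y_powr by (simp only: exp_add[symmetric]) (simp add: algebra_simps)
  then show ?thesis
    unfolding weight_def set_weight_def q_eq by (simp add: mult_ac)
qed

lemma H1_config_mirror:
  assumes A: "finite A" "A \<subseteq> {1..}" and B: "finite B" "B \<subseteq> {0..}"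
  shows "H1 (config A (uminus ` B))
    = real (card (walls A)) + real (card (walls B)) - 1 + (if 1 \<notin> A \<and> 0 \<notin> B then 2 else 0)"
proof -
  have B': "finite (uminus ` B)" "uminus ` B \<subseteq> {..0}" using B by auto
  have "0 \<in> walls A \<longleftrightarrow> 1 \<in> A" using A(2) by (auto simp: walls_def)
  then have "real (card (walls A - {0})) = real (card (walls A)) - (if 1 \<in> A then 1 else 0)"
    using finite_walls[OF A(1)] by (simp add: real_card_Diff_singleton)
  moreover have "0 \<in> walls (uminus ` B) \<longleftrightarrow> 0 \<in> B"
    using B(2) by (force simp: walls_uminus walls_def image_iff)
  then have "real (card (walls (uminus ` B) - {0})) = real (card (walls B)) - (if 0 \<in> B then 1 else 0)"
    using finite_walls[OF B'(1)] finite_walls[OF B(1)] unfolding walls_uminus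
    by (simp add: real_card_Diff_singleton card_image inj_on_def)
  moreover have "0 \<in> uminus ` B \<longleftrightarrow> 0 \<in> B" by force
  ultimately show ?thesis
    unfolding H1_config[OF A B'] by auto
qed

lemma sum_walls_atMost_lower_bound:
  assumes "finite B" "B \<subseteq> {..0}"
  shows "- (\<Sum>w\<in>walls B. real_of_int w) \<le> (\<Sum>i\<in>B. 2 * (1 - real_of_int i))"
proof -
  define B' where "B' = (\<lambda>i. i - 1) ` B"
  have nonpos: "\<And>w. w \<in> B \<union> B' \<Longrightarrow> w \<le> 0"
    using assms(2) by (auto simp: B'_def)
  have "- (\<Sum>w\<in>walls B. real_of_int w) = (\<Sum>w\<in>walls B. - real_of_int w)"
    by (simp add: sum_negf)
  also have "\<dots> \<le> (\<Sum>w\<in>B \<union> B'. - real_of_int w)"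
    using assms(1) walls_subset[of B] nonpos by (intro sum_mono2) (auto simp: B'_def)
  also have "\<dots> \<le> (\<Sum>w\<in>B. - real_of_int w) + (\<Sum>w\<in>B'. - real_of_int w)"
  proof -
    have "0 \<le> (\<Sum>w\<in>B \<inter> B'. - real_of_int w)"
      using nonpos by (intro sum_nonneg) auto
    moreover have "finite B'" using assms(1) by (simp add: B'_def)
    ultimately show ?thesis using assms(1) by (subst sum_Un) auto
  qed
  also have "(\<Sum>w\<in>B'. - real_of_int w) = (\<Sum>i\<in>B. 1 - real_of_int i)"
    unfolding B'_def by (subst sum.reindex) (auto simp: inj_on_def)
  also have "(\<Sum>w\<in>B. - real_of_int w) + (\<Sum>i\<in>B. 1 - real_of_int i) \<le> (\<Sum>i\<in>B. 2 * (1 - real_of_int i))"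
    by (simp add: sum.distrib[symmetric] sum_mono)
  finally show ?thesis .
qed

lemma weight_exp_H1_le:
  assumes AB: "finite A" "A \<subseteq> {1..}" "finite B" "B \<subseteq> {..0}"
    and "0 < q" "Q = q^2" "0 \<le> \<beta>" "0 \<le> \<kappa>"
  shows "weight (\<lambda>i. real_of_int i) \<beta> q c (config A B) * exp (\<kappa> * H1 (config A B))
     \<le> exp \<kappa> * (\<Prod>i\<in>A. exp (2 * \<kappa>) * Q powr (real_of_int i - c))
              * (\<Prod>i\<in>B. exp (2 * \<kappa>) * Q powr (c - real_of_int i) * exp (2 * \<beta> * (1 - real_of_int i)))"
proof -
  have "0 \<le> (\<Sum>w\<in>walls A. real_of_int w)"
    using walls_subset_atLeast[OF AB(2)] by (intro sum_nonneg) auto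
  then have "- H (\<lambda>i. real_of_int i) (config A B) \<le> (\<Sum>i\<in>B. 2 * (1 - real_of_int i))"
    using H_config[OF AB] sum_walls_atMost_lower_bound[OF AB(3,4)] by linarith
  then have H_le: "- \<beta> * H (\<lambda>i. real_of_int i) (config A B) \<le> \<beta> * (\<Sum>i\<in>B. 2 * (1 - real_of_int i))"
    using \<open>0 \<le> \<beta>\<close> by (metis minus_mult_commute mult_left_mono)
  have "card (walls A - {0}) \<le> 2 * card A" "card (walls B - {0}) \<le> 2 * card B"
    using order_trans[OF card_Diff1_le card_walls_le] AB(1,3) by auto
  then have "H1 (config A B) \<le> 2 * real (card A) + 2 * real (card B) + 1"
    unfolding H1_config[OF AB] of_nat_add by simp
  then have H1_le: "\<kappa> * H1 (config A B) \<le> \<kappa> * (2 * real (card A) + 2 * real (card B) + 1)"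
    using \<open>0 \<le> \<kappa>\<close> by (rule mult_left_mono)
  have "0 < Q" using assms(5,6) by simp
  have fc_eq: "fc c (config A B) = 2 * ((\<Sum>i\<in>A. real_of_int i - c) + (\<Sum>i\<in>B. c - real_of_int i))"
    using fc_config[OF AB(2,4)] by (simp add: sum_subtractf algebra_simps)
  have q_eq: "q powr fc c (config A B) = (\<Prod>i\<in>A. Q powr (real_of_int i - c)) * (\<Prod>i\<in>B. Q powr (c - real_of_int i))"
    unfolding fc_eq distrib_left powr_add powr_two_times[OF \<open>0 < q\<close>] \<open>Q = q^2\<close>[symmetric]
    using \<open>0 < Q\<close> AB by (simp add: powr_sum)
  have "weight (\<lambda>i. real_of_int i) \<beta> q c (config A B) * exp (\<kappa> * H1 (config A B))
      \<le> exp (\<beta> * (\<Sum>i\<in>B. 2 * (1 - real_of_int i))) * q powr fc c (config A B)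
         * exp (\<kappa> * (2 * real (card A) + 2 * real (card B) + 1))"
    unfolding weight_def using H_le H1_le by (intro mult_mono) auto
  also have "exp (\<beta> * (\<Sum>i\<in>B. 2 * (1 - real_of_int i))) = (\<Prod>i\<in>B. exp (2 * \<beta> * (1 - real_of_int i)))"
    by (simp add: sum_distrib_left exp_sum AB(3) algebra_simps)
  also have "exp (\<kappa> * (2 * real (card A) + 2 * real (card B) + 1))
      = exp \<kappa> * (\<Prod>i\<in>A. exp (2 * \<kappa>)) * (\<Prod>i\<in>B. exp (2 * \<kappa>))"
    by (simp add: exp_add[symmetric] exp_of_nat_mult[symmetric] algebra_simps)
  finally show ?thesis
    unfolding q_eq by (simp add: prod.distrib mult_ac)
qed

lemma summable_on_weight_exp_H1:
  assumes "0 < q" "Q = q^2" "y = exp (-2 * \<beta>)" "0 \<le> \<beta>" "Q < y" "0 \<le> \<kappa>"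
  shows "(\<lambda>\<sigma>. weight (\<lambda>i. real_of_int i) \<beta> q c \<sigma> * exp (\<kappa> * H1 \<sigma>)) summable_on B_set"
proof -
  have "0 < Q" "1 < y / Q"
    using assms(1,2,5) by auto
  moreover have "y \<le> 1"
    using assms(3,4) by simp
  ultimately have "Q < 1"
    using assms(5) by linarith
  define r where "r i = exp (2 * \<kappa>) * Q powr (real_of_int i - c)" for i :: int
  define \<rho> where "\<rho> i = exp (2 * \<kappa>) * Q powr (c - real_of_int i) * exp (2 * \<beta> * (1 - real_of_int i))" for i :: int
  have "r i = (exp (2 * \<kappa>) * Q powr (- c)) * Q powr real_of_int i" for i
    by (simp add: r_def powr_add[symmetric])
  then have "r summable_on {1..}"
    using summable_on_powr_atLeast_int[OF \<open>0 < Q\<close> \<open>Q < 1\<close>] by presburger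
  then have "(\<lambda>A. \<Prod>i\<in>A. r i) summable_on {A. A \<subseteq> {1..} \<and> finite A}"
    by (rule summable_on_prod_finite_subsets[rotated]) (simp add: r_def)
  moreover have "\<rho> i = (exp (2 * \<kappa>) * Q powr c * exp (2 * \<beta>)) * (y / Q) powr real_of_int i" for i
    using \<open>0 < Q\<close> unfolding \<rho>_def assms(3)
    by (simp add: powr_divide powr_diff powr_def exp_diff exp_minus ln_div ln_mult field_simps flip: exp_add)
  then have "\<rho> summable_on {..0}"
    using summable_on_powr_atMost_int[OF \<open>1 < y / Q\<close>] by presburger
  then have "(\<lambda>B. \<Prod>i\<in>B. \<rho> i) summable_on {B. B \<subseteq> {..0} \<and> finite B}"
    by (rule summable_on_prod_finite_subsets[rotated]) (simp add: \<rho>_def)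
  ultimately have "(\<lambda>(A, B). exp \<kappa> * ((\<Prod>i\<in>A. r i) * (\<Prod>i\<in>B. \<rho> i))) summable_on defect_sets"
    unfolding defect_sets_def case_prod_beta
    by (intro summable_on_cmult_right summable_on_mult_nonneg[unfolded case_prod_beta])
      (auto simp: r_def \<rho>_def conj_commute intro: prod_nonneg)
  then have "((\<lambda>\<sigma>. weight (\<lambda>i. real_of_int i) \<beta> q c \<sigma> * exp (\<kappa> * H1 \<sigma>)) \<circ> (\<lambda>(A, B). config A B))
      summable_on defect_sets"
    by (rule summable_on_comparison_test)
      (use weight_exp_H1_le[OF _ _ _ _ assms(1,2,4,6)] in \<open>auto simp: defect_sets_def r_def \<rho>_def weight_def mult.assoc\<close>)
  then show ?thesis
    unfolding B_set_eq_config_image by (subst summable_on_reindex[OF inj_on_config])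
qed

lemma H1_nonneg: "0 \<le> H1 \<sigma>"
  unfolding H1_def H_def by (simp add: sum_nonneg)

definition neutral_weight :: "real \<Rightarrow> real \<Rightarrow> real \<Rightarrow> int \<Rightarrow> (int \<Rightarrow> int) \<Rightarrow> real" where
  "neutral_weight \<beta> q c n \<sigma>
     = weight (\<lambda>i. real_of_int i) \<beta> q c \<sigma> * ((if Ncount \<sigma> = 0 then 1 else 0) * exp (- real_of_int n * \<beta> * H1 \<sigma>))"

lemma summable_on_neutral_weight:
  assumes "0 < q" "Q = q^2" "y = exp (-2 * \<beta>)" "0 \<le> \<beta>" "Q < y"
  shows "neutral_weight \<beta> q c n summable_on B_set"
proof (rule summable_on_comparison_test[OF summable_on_weight_exp_H1[OF assms, of "\<bar>real_of_int n\<bar> * \<beta>"]])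
  fix \<sigma>
  have "- real_of_int n * \<beta> * H1 \<sigma> \<le> \<bar>real_of_int n\<bar> * \<beta> * H1 \<sigma>"
    using assms(4) H1_nonneg[of \<sigma>] by (intro mult_right_mono) auto
  then show "neutral_weight \<beta> q c n \<sigma> \<le> weight (\<lambda>i. real_of_int i) \<beta> q c \<sigma> * exp (\<bar>real_of_int n\<bar> * \<beta> * H1 \<sigma>)"
    unfolding neutral_weight_def weight_def by (auto intro: mult_left_mono)
  show "0 \<le> neutral_weight \<beta> q c n \<sigma>"
    by (simp add: neutral_weight_def weight_def)
qed (use assms(4) in simp)

definition ground_config :: "int \<Rightarrow> int" where
  "ground_config = config {} {}"

lemma
  assumes "0 < q"
  shows ground_config_in_B_set: "ground_config \<in> B_set"
    and weight_ground_config: "weight (\<lambda>i. real_of_int i) \<beta> q c ground_config = 1"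
    and neutral_weight_ground_config: "neutral_weight \<beta> q c n ground_config = exp (- real_of_int n * \<beta>)"
proof -
  show "ground_config \<in> B_set"
    unfolding ground_config_def by (rule config_in_B_set) auto
  have "walls {} = {}" by (simp add: walls_def)
  then have "H (\<lambda>i. real_of_int i) ground_config = 0" "H1 ground_config = 1"
    "fc c ground_config = 0" "Ncount ground_config = 0"
    unfolding ground_config_def using H_config[of "{}" "{}"] H1_config[of "{}" "{}"] fc_config[of "{}" "{}"]
      Ncount_config[of "{}" "{}"] by auto
  then show "weight (\<lambda>i. real_of_int i) \<beta> q c ground_config = 1"
    "neutral_weight \<beta> q c n ground_config = exp (- real_of_int n * \<beta>)"
    using assms by (simp_all add: neutral_weight_def weight_def)
qed

lemma Zpart_pos:
  assumes "0 < q" "Q = q^2" "y = exp (-2 * \<beta>)" "0 \<le> \<beta>" "Q < y"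
  shows "0 < Zpart (\<lambda>i. real_of_int i) \<beta> q c"
proof -
  have summable: "weight (\<lambda>i. real_of_int i) \<beta> q c summable_on B_set"
    using summable_on_weight_exp_H1[OF assms order.refl] by simp
  have "(\<Sum>\<sigma>\<in>{ground_config}. weight (\<lambda>i. real_of_int i) \<beta> q c \<sigma>) \<le> Zpart (\<lambda>i. real_of_int i) \<beta> q c"
    unfolding Zpart_def using ground_config_in_B_set[OF assms(1)]
    by (intro finite_sum_le_infsum[OF summable]) (auto simp: weight_def)
  then show ?thesis
    using weight_ground_config[OF assms(1)] by simp
qed

lemma left_hypothesis_ratio:
  assumes "0 < q" "Q = q^2" "y = exp (-2 * \<beta>)" "i \<le> 0"
  shows "q powr (2 * (real_of_int i - c)) * exp (\<beta> * real_of_int (i - 1))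
           / (exp (\<beta> * \<bar>real_of_int i\<bar>) + q^2 * exp (\<beta> * \<bar>real_of_int (i - 2)\<bar>))
         = Q powr (- c) * exp (- \<beta>) / (1 + Q / y) * (Q / y) powr real_of_int i"
proof -
  have "0 < Q" "0 < y" using assms(1-3) by simp_all
  have abs: "\<bar>real_of_int i\<bar> = - real_of_int i" "\<bar>real_of_int (i - 2)\<bar> = 2 - real_of_int i"
    using assms(4) by auto
  have num: "q powr (2 * (real_of_int i - c)) * exp (\<beta> * real_of_int (i - 1))
      = Q powr (- c) * exp (- \<beta>) * (Q powr real_of_int i * exp (\<beta> * real_of_int i))"
    unfolding powr_two_times[OF assms(1)] assms(2)[symmetric]
    by (simp add: powr_diff exp_diff exp_minus powr_minus field_simps)
  have den: "exp (\<beta> * - real_of_int i) + Q * exp (\<beta> * (2 - real_of_int i))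
      = exp (- \<beta> * real_of_int i) * (1 + Q / y)"
    unfolding assms(3) by (simp add: exp_minus exp_diff field_simps flip: exp_add)
  have frac: "C * X / (E * D) = C / D * (X / E)" for C X E D :: real
    by (simp add: mult.commute)
  have "Q powr real_of_int i * exp (\<beta> * real_of_int i) / exp (- \<beta> * real_of_int i)
      = Q powr real_of_int i * (1 / y) powr real_of_int i"
    unfolding assms(3) by (simp add: powr_def exp_minus field_simps flip: exp_add)
  also have "\<dots> = (Q / y) powr real_of_int i"
    using \<open>0 < Q\<close> \<open>0 < y\<close> by (simp add: powr_mult[symmetric])
  finally show ?thesis
    unfolding abs num assms(2)[symmetric] den frac by simp
qed

lemma Q_less_y:
  assumes "0 < q" "Q = q^2" "y = exp (-2 * \<beta>)"
    and summable: "(\<lambda>i::int. inverse (1 + q powr (2 * (real_of_int i - c)) * exp (\<beta> * real_of_int (i - 1))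
            / (exp (\<beta> * \<bar>real_of_int i\<bar>) + q^2 * exp (\<beta> * \<bar>real_of_int (i - 2)\<bar>)))) summable_on {..0}"
  shows "Q < y"
proof (rule ccontr)
  define f where "f = (\<lambda>i::int. inverse (1 + q powr (2 * (real_of_int i - c)) * exp (\<beta> * real_of_int (i - 1))
            / (exp (\<beta> * \<bar>real_of_int i\<bar>) + q^2 * exp (\<beta> * \<bar>real_of_int (i - 2)\<bar>))))"
  define K where "K = Q powr (- c) * exp (- \<beta>) / (1 + Q / y)"
  assume "\<not> Q < y"
  then have "1 \<le> Q / y" using assms(3) by simp
  then have "0 \<le> K" by (simp add: K_def)
  have "inverse (1 + K) \<le> f i" if "i \<in> {..0}" for i
  proof -
    have "i \<le> 0" using that by simp
    then have "(Q / y) powr real_of_int i \<le> 1"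
      using powr_mono[of "real_of_int i" 0 "Q / y"] \<open>1 \<le> Q / y\<close> by (auto split: if_splits)
    then have "K * (Q / y) powr real_of_int i \<le> K"
      using \<open>0 \<le> K\<close> by (simp add: mult_left_le)
    moreover have "0 \<le> K * (Q / y) powr real_of_int i"
      using \<open>0 \<le> K\<close> by simp
    ultimately show ?thesis
      unfolding f_def left_hypothesis_ratio[OF assms(1-3) \<open>i \<le> 0\<close>] K_def[symmetric]
      by (intro le_imp_inverse_le) linarith+
  qed
  moreover have "0 < inverse (1 + K)"
    using \<open>0 \<le> K\<close> by simp
  ultimately have "\<not> f summable_on {..0}"
    by (intro not_summable_on_ge_pos_const[OF infinite_Iic])
  with summable show False
    unfolding f_def by contradiction
qed

section \<open>Charge-neutral configurations\<close>

definition two_sided_config :: "nat list \<Rightarrow> nat list \<Rightarrow> int list \<Rightarrow> int list \<Rightarrow> int \<Rightarrow> int" where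
  "two_sided_config ls ms us ts = config (blocks ms ts) (uminus ` blocks ls us)"

lemma neutral_weight_two_sided_config:
  assumes "0 < q" "Q = q^2" "y = exp (-2 * \<beta>)"
    and tuple: "(ls, ms) \<in> tuples L R" "1 \<le> L" "1 \<le> R"
    and adm: "admissible 0 ls us" "admissible 1 ms ts"
  shows "neutral_weight \<beta> q c n (two_sided_config ls ms us ts)
    = y powr (- real L) * y powr (real_of_int n * (2 * real R + 2 * real L - 1) / 2)
      * (if admissible 1 ls us \<and> admissible 2 ms ts then y powr real_of_int n else 1)
      * (set_weight y Q (-1) (blocks ls us) * set_weight y Q 1 (blocks ms ts))"
proof -
  define A where "A = blocks ms ts"
  define B where "B = blocks ls us"
  have A: "finite A" "A \<subseteq> {1..}" and B: "finite B" "B \<subseteq> {0..}"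
    using blocks_subset_atLeast adm by (auto simp: A_def B_def finite_blocks)
  have lens: "length ls = L" "length ms = R" "card A = card B" "ls \<noteq> []" "ms \<noteq> []"
    using tuple card_blocks[OF adm(1)] card_blocks[OF adm(2)] by (auto simp: tuples_def A_def B_def)
  define away where "away \<longleftrightarrow> admissible 1 ls us \<and> admissible 2 ms ts"
  have "Ncount (config A (uminus ` B)) = 0"
    using A B \<open>card A = card B\<close> by (subst Ncount_config) (auto simp: card_image)
  moreover have "card (walls B) = 2 * L" "card (walls A) = 2 * R"
    using card_walls_blocks adm lens by (auto simp: A_def B_def)
  moreover have "1 \<notin> A \<longleftrightarrow> admissible 2 ms ts" "0 \<notin> B \<longleftrightarrow> admissible 1 ls us"
    using admissible_succ_iff[OF adm(2)] admissible_succ_iff[OF adm(1)] lens by (simp_all add: A_def B_def)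
  ultimately have "neutral_weight \<beta> q c n (config A (uminus ` B))
      = set_weight y Q 1 A * set_weight y Q (-1) B * y powr (- real L)
        * y powr (real_of_int n * (2 * real R + 2 * real L - 1 + (if away then 2 else 0)) / 2)"
    unfolding neutral_weight_def weight_config_mirror[OF assms(1-3) A B \<open>card A = card B\<close>]
      H1_config_mirror[OF A B] assms(3) away_def
    by (simp add: powr_def algebra_simps flip: exp_add)
  moreover have "y powr (real_of_int n * (2 * real R + 2 * real L - 1 + (if away then 2 else 0)) / 2)
      = y powr (real_of_int n * (2 * real R + 2 * real L - 1) / 2) * (if away then y powr real_of_int n else 1)"
    by (simp add: powr_add[symmetric] field_simps)
  ultimately show ?thesis
    unfolding two_sided_config_def A_def B_def away_def by (simp add: mult_ac)
qed

lemma two_sided_sector_algebra: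
  fixes y Q lf rf k L R n :: real
  assumes "0 < y"
  shows "y powr (- L) * y powr (n * (2 * R + 2 * L - 1) / 2)
      * (y powr (- (k - 2 * L) / 2) * lf * (y powr ((k - 2 * R) / 2) * rf)
         + (y powr n - 1) * ((y powr (- L) * Q powr k * (y powr (- (k - 2 * L) / 2) * lf))
                           * (y powr R * Q powr k * (y powr ((k - 2 * R) / 2) * rf))))
    = y powr (n * L + (n - 1) * R)
      * (lf * rf * (y powr (- n / 2) + (y powr (n / 2) - y powr (- n / 2)) * y powr (R - L) * Q powr k * Q powr k))"
proof -
  define Z where "Z = y powr (R - L) * Q powr k * Q powr k"
  define N where "N = y powr (n * (2 * R + 2 * L - 1) / 2)"
  have ring: "a * N * (b * lf * (c * rf) + (p - 1) * (a * e * (b * lf) * (d * e * (c * rf))))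
      = (a * b * c) * N * lf * rf * (1 + (p - 1) * (d * e * (a * e)))" for a b c d e p :: real
    by algebra
  have Z: "y powr R * Q powr k * (y powr (- L) * Q powr k) = Z"
    by (simp add: Z_def powr_add[symmetric] mult_ac)
  have R: "y powr (- L) * y powr (- (k - 2 * L) / 2) * y powr ((k - 2 * R) / 2) = y powr (- R)"
    by (simp add: powr_add[symmetric] field_simps)
  have RN: "y powr (- R) * N = y powr (n * L + (n - 1) * R) * y powr (- n / 2)"
    by (simp add: N_def powr_add[symmetric] field_simps)
  have "y powr n * y powr (- n / 2) = y powr (n / 2)"
    by (simp add: powr_add[symmetric])
  then have n: "y powr (- n / 2) * (1 + (y powr n - 1) * Z)
      = y powr (- n / 2) + (y powr (n / 2) - y powr (- n / 2)) * Z"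
    by (simp add: algebra_simps)
  have "y powr (- L) * N
      * (y powr (- (k - 2 * L) / 2) * lf * (y powr ((k - 2 * R) / 2) * rf)
         + (y powr n - 1) * ((y powr (- L) * Q powr k * (y powr (- (k - 2 * L) / 2) * lf))
                           * (y powr R * Q powr k * (y powr ((k - 2 * R) / 2) * rf))))
    = (y powr (- R) * N) * (lf * rf) * (1 + (y powr n - 1) * Z)"
    unfolding ring R Z by (simp only: mult.assoc)
  also have "\<dots> = y powr (n * L + (n - 1) * R) * (lf * rf * (y powr (- n / 2) * (1 + (y powr n - 1) * Z)))"
    unfolding RN by (simp only: mult_ac)
  also have "\<dots> = y powr (n * L + (n - 1) * R) * (lf * rf * (y powr (- n / 2) + (y powr (n / 2) - y powr (- n / 2)) * Z))"
    unfolding n ..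
  finally show ?thesis
    by (simp only: N_def Z_def mult.assoc)
qed

lemma two_sided_sector_value:
  assumes "0 < y" and tuple: "(ls, ms) \<in> tuples L R" "1 \<le> L" "1 \<le> R"
  shows "y powr (- real L) * y powr (real_of_int n * (2 * real R + 2 * real L - 1) / 2)
      * (block_sum y Q (-1) 0 ls * block_sum y Q 1 1 ms
         + (y powr n - 1) * (block_sum y Q (-1) 1 ls * block_sum y Q 1 2 ms))
    = y powr real_of_int (n * int L + (n - 1) * int R) * inner_term y Q n ls ms"
proof -
  have lens: "length ls = L" "length ms = R" "sum_list ls = sum_list ms"
    using tuple(1) by (auto simp: tuples_def)
  obtain l ls' m ms' where ls: "ls = l # ls'" and ms: "ms = m # ms'"
    using lens tuple(2,3) by (cases ls; cases ms) auto
  define k where "k = sum_list ms"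
  have "block_ratio y Q (-1) ls = y powr (- real L) * Q powr real k"
    "block_ratio y Q 1 ms = y powr real R * Q powr real k"
    by (simp_all add: block_ratio_def lens k_def)
  moreover have "block_sum y Q (-1) 1 ls = block_ratio y Q (-1) ls * block_sum y Q (-1) 0 ls"
    "block_sum y Q 1 2 ms = block_ratio y Q 1 ms * block_sum y Q 1 1 ms"
    using block_sum_Cons_succ[of y Q "-1" 0 l ls'] block_sum_Cons_succ[of y Q 1 1 m ms']
    by (simp_all add: ls ms)
  moreover have "block_sum y Q (-1) 0 ls = y powr (- (real k - 2 * real L) / 2) * left_factor y Q ls"
    "block_sum y Q 1 1 ms = y powr ((real k - 2 * real R) / 2) * right_factor y Q ms"
    by (simp_all add: block_sum_def left_factor_eq_block_factor right_factor_eq_block_factor k_def lens)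
  ultimately show ?thesis
    using two_sided_sector_algebra[OF \<open>0 < y\<close>, of "real L" "real_of_int n" "real R" "real k" "left_factor y Q ls"
        "right_factor y Q ms" Q]
    by (simp add: inner_term_def k_def lens)
qed

lemma has_sum_two_sided_sector:
  assumes "0 < q" "Q = q^2" "y = exp (-2 * \<beta>)" "0 \<le> \<beta>" "Q < y"
    and tuple: "(ls, ms) \<in> tuples L R" "1 \<le> L" "1 \<le> R"
  shows "((\<lambda>(us, ts). neutral_weight \<beta> q c n (two_sided_config ls ms us ts)) has_sum
           (y powr real_of_int (n * int L + (n - 1) * int R) * inner_term y Q n ls ms))
         ({us. admissible 0 ls us} \<times> {ts. admissible 1 ms ts})"
proof -
  have "0 < Q" "0 < y" "y \<le> 1" using assms(1-4) by auto
  then have "Q < 1" using \<open>Q < y\<close> by linarith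
  have pos: "\<forall>x\<in>set ls. 1 \<le> x" "\<forall>x\<in>set ms. 1 \<le> x"
    using tuple(1) by (auto simp: tuples_def)
  define g where "g = (\<lambda>(us, ts). set_weight y Q (-1) (blocks ls us) * set_weight y Q 1 (blocks ms ts))"
  define S where "S = {us. admissible 0 ls us} \<times> {ts. admissible 1 ms ts}"
  \<comment> \<open>On \<open>T\<close> neither first run touches the origin, so there is a domain wall at \<open>0\<close>.\<close>
  define T where "T = {us. admissible 1 ls us} \<times> {ts. admissible 2 ms ts}"
  define a where "a = y powr (- real L) * y powr (real_of_int n * (2 * real R + 2 * real L - 1) / 2)"
  have "((\<lambda>us. set_weight y Q (-1) (blocks ls us)) has_sum block_sum y Q (-1) b ls) {us. admissible b ls us}"
    "((\<lambda>ts. set_weight y Q 1 (blocks ms ts)) has_sum block_sum y Q 1 b' ms) {ts. admissible b' ms ts}" for b b'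
    using has_sum_set_weight_blocks[OF \<open>0 < Q\<close> \<open>0 < y\<close> ratio_lt_1_left pos(1)]
      has_sum_set_weight_blocks[OF \<open>0 < Q\<close> \<open>0 < y\<close> ratio_lt_1_right pos(2)]
      \<open>0 < Q\<close> \<open>0 < y\<close> \<open>Q < y\<close> \<open>Q < 1\<close> \<open>y \<le> 1\<close>
    by blast+
  then have "(g has_sum block_sum y Q (-1) b ls * block_sum y Q 1 b' ms)
      ({us. admissible b ls us} \<times> {ts. admissible b' ms ts})" for b b'
    unfolding g_def by (intro has_sum_mult_nonneg) (auto simp: set_weight_nonneg)
  moreover have "T \<subseteq> S"
    unfolding S_def T_def by (auto intro: admissible_mono)
  ultimately have "((\<lambda>p. a * (g p + (y powr n - 1) * (if p \<in> T then g p else 0))) has_sum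
      a * (block_sum y Q (-1) 0 ls * block_sum y Q 1 1 ms
           + (y powr n - 1) * (block_sum y Q (-1) 1 ls * block_sum y Q 1 2 ms))) S"
    unfolding S_def T_def by (intro has_sum_cmult_right has_sum_add) (simp_all add: has_sum_restrict_subset)
  moreover have "neutral_weight \<beta> q c n (two_sided_config ls ms us ts)
      = a * (g (us, ts) + (y powr n - 1) * (if (us, ts) \<in> T then g (us, ts) else 0))"
    if "(us, ts) \<in> S" for us ts
    using neutral_weight_two_sided_config[OF assms(1-3) tuple, of us ts c n] that
    by (simp add: S_def T_def g_def a_def algebra_simps)
  ultimately show ?thesis
    unfolding S_def[symmetric] a_def two_sided_sector_value[OF \<open>0 < y\<close> tuple]
    by (subst has_sum_cong) auto
qed

text \<open>In a code \<open>((L, R), (ls, ms), us, ts)\<close>, \<open>ls\<close> and \<open>ms\<close> are the run lengths \<open>\<ell>\<^sub>j\<close> and \<open>m\<^sub>j\<close> of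
  the (mirrored) plus spins left of the origin and of the minus spins right of it, and \<open>us\<close>, \<open>ts\<close> their
  offsets.\<close>

definition neutral_codes :: "((nat \<times> nat) \<times> (nat list \<times> nat list) \<times> int list \<times> int list) set" where
  "neutral_codes = Sigma ({1..} \<times> {1..})
     (\<lambda>(L, R). Sigma (tuples L R) (\<lambda>(ls, ms). {us. admissible 0 ls us} \<times> {ts. admissible 1 ms ts}))"

definition config_of_code :: "(nat \<times> nat) \<times> (nat list \<times> nat list) \<times> int list \<times> int list \<Rightarrow> int \<Rightarrow> int" where
  "config_of_code p = (case p of (_, (ls, ms), us, ts) \<Rightarrow> two_sided_config ls ms us ts)"

lemma
  assumes "(ls, ms) \<in> tuples L R" "1 \<le> R" "admissible 0 ls us" "admissible 1 ms ts"
  shows two_sided_config_in_B_set: "two_sided_config ls ms us ts \<in> B_set"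
    and Ncount_two_sided_config: "Ncount (two_sided_config ls ms us ts) = 0"
    and two_sided_config_neq_ground: "two_sided_config ls ms us ts \<noteq> ground_config"
proof -
  have A: "blocks ms ts \<subseteq> {1..}" and B: "uminus ` blocks ls us \<subseteq> {..0}"
    using blocks_subset_atLeast assms(3,4) by fastforce+
  show "two_sided_config ls ms us ts \<in> B_set"
    unfolding two_sided_config_def using A B by (intro config_in_B_set) (auto simp: finite_blocks)
  show "Ncount (two_sided_config ls ms us ts) = 0"
    unfolding two_sided_config_def Ncount_config[OF A B] using assms(1) card_blocks[OF assms(3)] card_blocks[OF assms(4)]
    by (simp add: card_image tuples_def)
  have right: "right_minus (two_sided_config ls ms us ts) = blocks ms ts"
    unfolding two_sided_config_def by (rule right_minus_config[OF A])
  have "ms \<noteq> []" using assms(1,2) by (auto simp: tuples_def)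
  then have "blocks ms ts \<noteq> {}"
    using blocks_Cons_nonempty assms(4) by (cases ms) auto
  then show "two_sided_config ls ms us ts \<noteq> ground_config"
    using right right_minus_config[of "{}" "{}"] by (auto simp: ground_config_def)
qed

lemma inj_on_config_of_code: "inj_on config_of_code neutral_codes"
proof (rule inj_onI)
  fix p p' assume "p \<in> neutral_codes" "p' \<in> neutral_codes" and eq: "config_of_code p = config_of_code p'"
  then obtain L R ls ms us ts L' R' ls' ms' us' ts' where
    p: "p = ((L, R), (ls, ms), us, ts)" "(ls, ms) \<in> tuples L R" "admissible 0 ls us" "admissible 1 ms ts" and
    p': "p' = ((L', R'), (ls', ms'), us', ts')" "(ls', ms') \<in> tuples L' R'" "admissible 0 ls' us'" "admissible 1 ms' ts'"
    unfolding neutral_codes_def by auto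
  have A: "blocks ms ts \<subseteq> {1..}" "blocks ms' ts' \<subseteq> {1..}"
    and B: "uminus ` blocks ls us \<subseteq> {..0}" "uminus ` blocks ls' us' \<subseteq> {..0}"
    using blocks_subset_atLeast p p' by fastforce+
  have "config (blocks ms ts) (uminus ` blocks ls us) = config (blocks ms' ts') (uminus ` blocks ls' us')"
    using eq by (simp add: p p' config_of_code_def two_sided_config_def)
  then have "right_minus (config (blocks ms ts) (uminus ` blocks ls us))
      = right_minus (config (blocks ms' ts') (uminus ` blocks ls' us'))"
    "left_plus (config (blocks ms ts) (uminus ` blocks ls us))
      = left_plus (config (blocks ms' ts') (uminus ` blocks ls' us'))"
    by simp_all
  then have "blocks ms ts = blocks ms' ts'" "uminus ` blocks ls us = uminus ` blocks ls' us'"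
    by (simp_all only: right_minus_config[OF A(1)] right_minus_config[OF A(2)] left_plus_config[OF B(1)]
      left_plus_config[OF B(2)])
  then have "ms = ms' \<and> ts = ts'" "ls = ls' \<and> us = us'"
    using blocks_inj p(3,4) p'(3,4) by (metis inj_image_eq_iff inj_on_def neg_equal_iff_equal)+
  moreover then have "L = L' \<and> R = R'"
    using p(2) p'(2) by (auto simp: tuples_def)
  ultimately show "p = p'"
    using p(1) p'(1) by simp
qed

lemma config_of_code_image:
  "config_of_code ` neutral_codes = {\<sigma> \<in> B_set. Ncount \<sigma> = 0} - {ground_config}"
proof
  show "config_of_code ` neutral_codes \<subseteq> {\<sigma> \<in> B_set. Ncount \<sigma> = 0} - {ground_config}"
    using two_sided_config_in_B_set Ncount_two_sided_config two_sided_config_neq_ground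
    by (auto simp: neutral_codes_def config_of_code_def)
next
  show "{\<sigma> \<in> B_set. Ncount \<sigma> = 0} - {ground_config} \<subseteq> config_of_code ` neutral_codes"
  proof
    fix \<sigma> assume \<sigma>: "\<sigma> \<in> {\<sigma> \<in> B_set. Ncount \<sigma> = 0} - {ground_config}"
    define A where "A = right_minus \<sigma>"
    define B where "B = left_plus \<sigma>"
    have "(A, B) \<in> defect_sets" and \<sigma>_eq: "\<sigma> = config A B"
      using B_set_config_decomp \<sigma> by (auto simp: A_def B_def)
    then have A: "finite A" "A \<subseteq> {1..}" and B: "finite (uminus ` B)" "uminus ` B \<subseteq> {0..}"
      and "finite B" by (auto simp: defect_sets_def)
    have "card A = card B"
      using \<sigma> \<sigma>_eq Ncount_config[OF A(2)] \<open>(A, B) \<in> defect_sets\<close> by (auto simp: defect_sets_def)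
    have "A \<noteq> {}"
      using \<sigma> \<sigma>_eq \<open>card A = card B\<close> \<open>finite B\<close> by (auto simp: ground_config_def)
    obtain ms ts where ms: "admissible 1 ms ts" "blocks ms ts = A"
      using blocks_surj[OF A] by blast
    obtain ls us where ls: "admissible 0 ls us" "blocks ls us = uminus ` B"
      using blocks_surj[OF B] by blast
    have "sum_list ms = sum_list ls"
      using card_blocks[OF ms(1)] card_blocks[OF ls(1)] \<open>card A = card B\<close> ms(2) ls(2)
      by (simp add: card_image)
    moreover have "ms \<noteq> []" "ls \<noteq> []"
      using \<open>A \<noteq> {}\<close> \<open>card A = card B\<close> A(1) ms(2) ls(2) by auto
    ultimately have "((length ls, length ms), (ls, ms), us, ts) \<in> neutral_codes"
      using admissible_imp_positive ms(1) ls(1)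
      by (auto simp: neutral_codes_def tuples_def Suc_le_eq)
    moreover have "config_of_code ((length ls, length ms), (ls, ms), us, ts) = \<sigma>"
      using ms(2) ls(2) \<sigma>_eq by (simp add: config_of_code_def two_sided_config_def image_image)
    ultimately show "\<sigma> \<in> config_of_code ` neutral_codes"
      by (metis image_eqI)
  qed
qed

lemma summable_on_neutral_codes:
  assumes "0 < q" "Q = q^2" "y = exp (-2 * \<beta>)" "0 \<le> \<beta>" "Q < y"
  shows "(neutral_weight \<beta> q c n \<circ> config_of_code) summable_on neutral_codes"
  by (subst summable_on_reindex[OF inj_on_config_of_code, symmetric])
    (auto intro: summable_on_subset_banach[OF summable_on_neutral_weight[OF assms]] simp: config_of_code_image)

lemma infsum_neutral_codes:
  assumes "0 < q" "Q = q^2" "y = exp (-2 * \<beta>)" "0 \<le> \<beta>" "Q < y"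
  shows "infsum (neutral_weight \<beta> q c n \<circ> config_of_code) neutral_codes
    = (\<Sum>\<^sub>\<infinity>(L, R)\<in>{1..} \<times> {1..}. y powr real_of_int (n * int L + (n - 1) * int R)
           * (\<Sum>\<^sub>\<infinity>(ls, ms)\<in>tuples L R. inner_term y Q n ls ms))"
proof -
  define F where "F = neutral_weight \<beta> q c n \<circ> config_of_code"
  define C where "C = (\<lambda>(ls, ms). {us. admissible 0 ls us} \<times> {ts. admissible 1 ms ts})"
  have F_summable: "F summable_on Sigma ({1..} \<times> {1..}) (\<lambda>(L, R). Sigma (tuples L R) C)"
    using summable_on_neutral_codes[OF assms] by (simp add: F_def neutral_codes_def C_def)
  have "((\<lambda>z. F ((L, R), z)) has_sum
      y powr real_of_int (n * int L + (n - 1) * int R) * (\<Sum>\<^sub>\<infinity>(ls, ms)\<in>tuples L R. inner_term y Q n ls ms))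
      (Sigma (tuples L R) C)" if "(L, R) \<in> {1..} \<times> {1..}" for L R
  proof -
    have F_section: "(\<lambda>z. F ((L, R), z)) summable_on Sigma (tuples L R) C"
      using summable_on_Sigma_section[OF F_summable that] by simp
    have "((\<lambda>w. F ((L, R), (ls, ms), w)) has_sum
        y powr real_of_int (n * int L + (n - 1) * int R) * inner_term y Q n ls ms) (C (ls, ms))"
      if "(ls, ms) \<in> tuples L R" for ls ms
      using has_sum_two_sided_sector[OF assms that, of c n] \<open>(L, R) \<in> {1..} \<times> {1..}\<close>
      by (simp add: F_def C_def config_of_code_def split_def)
    then have "infsum (\<lambda>z. F ((L, R), z)) (Sigma (tuples L R) C)
        = (\<Sum>\<^sub>\<infinity>(ls, ms)\<in>tuples L R. y powr real_of_int (n * int L + (n - 1) * int R) * inner_term y Q n ls ms)"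
      by (intro infsum_Sigma_has_sum_sections[OF F_section]) auto
    also have "\<dots> = y powr real_of_int (n * int L + (n - 1) * int R) * (\<Sum>\<^sub>\<infinity>(ls, ms)\<in>tuples L R. inner_term y Q n ls ms)"
      by (simp add: split_def infsum_cmult_right')
    finally show ?thesis
      using F_section by (metis has_sum_infsum)
  qed
  then have "infsum F (Sigma ({1..} \<times> {1..}) (\<lambda>(L, R). Sigma (tuples L R) C))
      = (\<Sum>\<^sub>\<infinity>(L, R)\<in>{1..} \<times> {1..}. y powr real_of_int (n * int L + (n - 1) * int R)
         * (\<Sum>\<^sub>\<infinity>(ls, ms)\<in>tuples L R. inner_term y Q n ls ms))"
    by (intro infsum_Sigma_has_sum_sections[OF F_summable]) auto
  then show ?thesis
    by (simp add: F_def neutral_codes_def C_def)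
qed

lemma infsum_neutral_weight:
  assumes "0 < q" "Q = q^2" "y = exp (-2 * \<beta>)" "0 \<le> \<beta>" "Q < y"
  shows "infsum (neutral_weight \<beta> q c n) B_set
    = exp (- real_of_int n * \<beta>)
      + (\<Sum>\<^sub>\<infinity>(L, R)\<in>{1..} \<times> {1..}. y powr real_of_int (n * int L + (n - 1) * int R)
           * (\<Sum>\<^sub>\<infinity>(ls, ms)\<in>tuples L R. inner_term y Q n ls ms))"
proof -
  define f where "f = neutral_weight \<beta> q c n"
  have "B_set = insert ground_config (B_set - {ground_config})"
    using ground_config_in_B_set[OF assms(1)] by blast
  then have "infsum f B_set = f ground_config + infsum f (B_set - {ground_config})"
    using summable_on_subset_banach[OF summable_on_neutral_weight[OF assms]]
    by (metis Diff_iff Diff_subset infsum_insert insertCI f_def)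
  also have "infsum f (B_set - {ground_config}) = infsum f (config_of_code ` neutral_codes)"
    unfolding config_of_code_image by (rule infsum_cong_neutral) (auto simp: f_def neutral_weight_def)
  also have "\<dots> = infsum (f \<circ> config_of_code) neutral_codes"
    by (rule infsum_reindex[OF inj_on_config_of_code])
  finally show ?thesis
    using infsum_neutral_codes[OF assms] neutral_weight_ground_config[OF assms(1)] by (simp add: f_def)
qed

theorem corollary4p4:
  fixes c \<beta> q Q y :: real and J :: "int \<Rightarrow> real" and n :: int
  assumes "\<beta> \<ge> 0" and "0 < q" and "q < 1" and "Q = q^2" and "y = exp (-2 * \<beta>)"
    and "J = (\<lambda>i. real_of_int i)"
    and "(\<lambda>i::int. inverse (1 + q powr (2 * (real_of_int i - c)) * exp (\<beta> * J (i - 1))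
            / (exp (\<beta> * \<bar>J i\<bar>) + q^2 * exp (\<beta> * \<bar>J (i - 2)\<bar>)))) summable_on {..0}"
    and "(\<lambda>i::int. inverse (1 + q powr (- 2 * (real_of_int i - c)) * exp (\<beta> * J (i - 1))
            / (exp (\<beta> * \<bar>J i\<bar>) + q powr (-2) * exp (\<beta> * \<bar>J (i - 2)\<bar>)))) summable_on {1..}"
  shows "Zpart J \<beta> q c * mu J \<beta> q c (\<lambda>\<sigma>. (if Ncount \<sigma> = 0 then 1 else 0) * exp (- real_of_int n * \<beta> * H1 \<sigma>))
    = exp (- real_of_int n * \<beta>)
      + (\<Sum>\<^sub>\<infinity>(L, R)\<in>{1..} \<times> {1..}. y powr real_of_int (n * int L + (n - 1) * int R)
           * (\<Sum>\<^sub>\<infinity>(ls, ms)\<in>tuples L R. inner_term y Q n ls ms))"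
proof -
  have "Q < y"
    using Q_less_y[OF assms(2,4,5)] assms(6,7) by simp
  note hyps = assms(2,4,5,1) this
  have "Zpart J \<beta> q c * mu J \<beta> q c (\<lambda>\<sigma>. (if Ncount \<sigma> = 0 then 1 else 0) * exp (- real_of_int n * \<beta> * H1 \<sigma>))
      = infsum (neutral_weight \<beta> q c n) B_set"
    using Zpart_pos[OF hyps, of c] unfolding mu_def neutral_weight_def assms(6) by simp
  also have "\<dots> = exp (- real_of_int n * \<beta>)
      + (\<Sum>\<^sub>\<infinity>(L, R)\<in>{1..} \<times> {1..}. y powr real_of_int (n * int L + (n - 1) * int R)
           * (\<Sum>\<^sub>\<infinity>(ls, ms)\<in>tuples L R. inner_term y Q n ls ms))"
    by (rule infsum_neutral_weight[OF hyps])
  finally show ?thesis .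
qed

end
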